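(* Let $\Gamma$ be a countable group and let $S\leq\Gamma$ be a nontrivial subgroup. Fix a family $(\varepsilon_\gamma)_{\gamma\in\Gamma\setminus\{e_\Gamma\}}$ of real numbers in $]0,1[$ such that $\prod_{\gamma\in\Gamma\setminus\{e_\Gamma\}}(1-\varepsilon_\gamma)>0$, and a family $(n_\gamma)_{\gamma\in\Gamma\setminus\{e_\Gamma\}}$ of pairwise coprime integers. Assume that for every $\gamma\in\Gamma\setminus\{e_\Gamma\}$ there exists a finite index subgroup $\Gamma_\gamma\leq\Gamma$, whose index is a power of $n_\gamma$, such that (1) $\gamma\notin\Gamma_\gamma$, and (2) $\lvert\{q\in\Gamma/\Gamma_\gamma\colon sq=q \text{ for all } s\in S\}\rvert\geq(1-\varepsilon_\gamma)[\Gamma:\Gamma_\gamma]$. For each finite $F\subseteq\Gamma\setminus\{e_\Gamma\}$ let $X_F=\Gamma/\bigcap_{\gamma\in F}\Gamma_\gamma$ with the left-translation action of $\Gamma$ and the uniform probability measure $\mu_F$. Then the profinite action $\Gamma\curvearrowright\varprojlim_F(X_F,\mu_F)$ is allosteric.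
   Context: The finite subsets $F$ of $\Gamma\setminus\{e_\Gamma\}$ are directed by inclusion; for $F\subseteq G$ the map $X_G\to X_F$ is the natural $\Gamma$-equivariant surjection $x\bigcap_{\gamma\in G}\Gamma_\gamma\mapsto x\bigcap_{\gamma\in F}\Gamma_\gamma$. The inverse limit $\varprojlim_F X_F=\{(x_F)\in\prod_F X_F\colon x_F \text{ is the image of } x_G \text{ whenever } F\subseteq G\}$ is a compact metrizable totally disconnected space with the product topology and diagonal $\Gamma$-action, and it carries the unique Borel probability measure $\mu$ whose pushforward to each $X_F$ is $\mu_F$. A minimal ergodic action $\Gamma\curvearrowright(X,\mu)$ (action by homeomorphisms on a compact metric space with all orbits dense, $\mu$ an ergodic invariant Borel probability measure) is allosteric if the set of points with trivial stabilizer is comeager (topologically free) but does not have full $\mu$-measure (not essentially free); in particular the conclusion includes that the action is minimal and ergodic. *)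

theory Defs
  imports "HOL-Probability.Probability" "HOL-Algebra.Left_Coset"
begin

definition borel_of :: "'b topology \<Rightarrow> 'b measure" where
  "borel_of T = sigma (topspace T) {U. openin T U}"

definition comeager_in :: "'b topology \<Rightarrow> 'b set \<Rightarrow> bool" where
  "comeager_in T A \<longleftrightarrow>
     (\<exists>U :: nat \<Rightarrow> 'b set. (\<forall>n. openin T (U n) \<and> T closure_of (U n) = topspace T)
        \<and> (\<Inter>n. U n) \<subseteq> A)"

definition top_action :: "('a, 'c) monoid_scheme \<Rightarrow> 'b topology \<Rightarrow> ('a \<Rightarrow> 'b \<Rightarrow> 'b) \<Rightarrow> bool" where
  "top_action G T act \<longleftrightarrow>
     (\<forall>x\<in>topspace T. act \<one>\<^bsub>G\<^esub> x = x) \<and>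
     (\<forall>g\<in>carrier G. \<forall>h\<in>carrier G. \<forall>x\<in>topspace T.
        act (g \<otimes>\<^bsub>G\<^esub> h) x = act g (act h x)) \<and>
     (\<forall>g\<in>carrier G. homeomorphic_map T T (act g))"

definition minimal_action :: "('a, 'c) monoid_scheme \<Rightarrow> 'b topology \<Rightarrow> ('a \<Rightarrow> 'b \<Rightarrow> 'b) \<Rightarrow> bool" where
  "minimal_action G T act \<longleftrightarrow>
     (\<forall>x\<in>topspace T. T closure_of ((\<lambda>g. act g x) ` carrier G) = topspace T)"

definition ergodic_invariant_measure ::
  "('a, 'c) monoid_scheme \<Rightarrow> 'b topology \<Rightarrow> ('a \<Rightarrow> 'b \<Rightarrow> 'b) \<Rightarrow> 'b measure \<Rightarrow> bool" where
  "ergodic_invariant_measure G T act \<mu> \<longleftrightarrow>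
     prob_space \<mu> \<and> space \<mu> = topspace T \<and> sets \<mu> = sets (borel_of T) \<and>
     (\<forall>g\<in>carrier G. act g \<in> \<mu> \<rightarrow>\<^sub>M \<mu> \<and> distr \<mu> \<mu> (act g) = \<mu>) \<and>
     (\<forall>A\<in>sets \<mu>. (\<forall>g\<in>carrier G. act g ` A = A) \<longrightarrow>
        measure \<mu> A = 0 \<or> measure \<mu> A = 1)"

definition free_points :: "('a, 'c) monoid_scheme \<Rightarrow> 'b topology \<Rightarrow> ('a \<Rightarrow> 'b \<Rightarrow> 'b) \<Rightarrow> 'b set" where
  "free_points G T act = {x\<in>topspace T. \<forall>g\<in>carrier G. act g x = x \<longrightarrow> g = \<one>\<^bsub>G\<^esub>}"

text \<open>Allosteric minimal ergodic action on a compact metrizable space: topologically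
  free (free points comeager) but not essentially free (free points not of full measure).\<close>
definition allosteric ::
  "('a, 'c) monoid_scheme \<Rightarrow> 'b topology \<Rightarrow> ('a \<Rightarrow> 'b \<Rightarrow> 'b) \<Rightarrow> 'b measure \<Rightarrow> bool" where
  "allosteric G T act \<mu> \<longleftrightarrow>
     compact_space T \<and> metrizable_space T \<and>
     top_action G T act \<and> minimal_action G T act \<and> ergodic_invariant_measure G T act \<mu> \<and>
     comeager_in T (free_points G T act) \<and>
     \<not> (AE x in \<mu>. x \<in> free_points G T act)"

definition fin_index :: "('a, 'c) monoid_scheme \<Rightarrow> 'a set set" where
  "fin_index G = {F. finite F \<and> F \<subseteq> carrier G - {\<one>\<^bsub>G\<^esub>}}"

definition sub_int :: "('a, 'c) monoid_scheme \<Rightarrow> ('a \<Rightarrow> 'a set) \<Rightarrow> 'a set \<Rightarrow> 'a set" where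
  "sub_int G H F = carrier G \<inter> (\<Inter>\<gamma>\<in>F. H \<gamma>)"

definition XF :: "('a, 'c) monoid_scheme \<Rightarrow> ('a \<Rightarrow> 'a set) \<Rightarrow> 'a set \<Rightarrow> 'a set set" where
  "XF G H F = lcosets\<^bsub>G\<^esub> (sub_int G H F)"

definition inv_lim :: "('a, 'c) monoid_scheme \<Rightarrow> ('a \<Rightarrow> 'a set) \<Rightarrow> ('a set \<Rightarrow> 'a set) set" where
  "inv_lim G H = {x \<in> (\<Pi>\<^sub>E F\<in>fin_index G. XF G H F).
      \<forall>F\<in>fin_index G. \<forall>F'\<in>fin_index G. F \<subseteq> F' \<longrightarrow>
        (\<forall>g\<in>x F'. x F = g <#\<^bsub>G\<^esub> sub_int G H F)}"

definition inv_lim_top :: "('a, 'c) monoid_scheme \<Rightarrow> ('a \<Rightarrow> 'a set) \<Rightarrow> ('a set \<Rightarrow> 'a set) topology" where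
  "inv_lim_top G H = subtopology
      (product_topology (\<lambda>F. discrete_topology (XF G H F)) (fin_index G)) (inv_lim G H)"

definition inv_lim_act :: "('a, 'c) monoid_scheme \<Rightarrow> 'a \<Rightarrow> ('a set \<Rightarrow> 'a set) \<Rightarrow> ('a set \<Rightarrow> 'a set)" where
  "inv_lim_act G g x = restrict (\<lambda>F. g <#\<^bsub>G\<^esub> x F) (fin_index G)"

definition has_uniform_marginals ::
  "('a, 'c) monoid_scheme \<Rightarrow> ('a \<Rightarrow> 'a set) \<Rightarrow> ('a set \<Rightarrow> 'a set) measure \<Rightarrow> bool" where
  "has_uniform_marginals G H \<mu> \<longleftrightarrow>
     prob_space \<mu> \<and> space \<mu> = inv_lim G H \<and> sets \<mu> = sets (borel_of (inv_lim_top G H)) \<and>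
     (\<forall>F\<in>fin_index G. (\<lambda>x. x F) \<in> \<mu> \<rightarrow>\<^sub>M count_space (XF G H F) \<and>
        distr \<mu> (count_space (XF G H F)) (\<lambda>x. x F) = uniform_count_measure (XF G H F))"

end

theory Submission
  imports Defs
begin

(*
  Write K_F for the intersection of the H_gamma, gamma in F, and X_F = G/K_F.  G acts transitively
  on every X_F, so all orbits in the inverse limit are dense, and an invariant set meets all fibres
  of a projection to X_F in the same measure; it is therefore independent of every cylinder set,
  hence of itself, which gives ergodicity.  The uniform measure itself comes from Caratheodory's
  extension theorem, continuity at the empty set being compactness.  The image of each a in G
  has trivial stabilizer, since g fixing it would put inv a * g * a into its own subgroup H; these
  images are dense, so the non-fixed sets of all g <> 1 are dense open and the action is
  topologically free.  Finally, coprimality of the indices makes X_F the product of the G/H_gamma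
  (Chinese remainder theorem), with the S-fixed cosets corresponding to products of S-fixed
  cosets; so the S-fixed points of the inverse limit, none of which is free, have measure at
  least the product of the 1 - eps_gamma, which is positive.
*)

(* The ASCII multiset syntax \<open><#\<close> would clash with left cosets. *)
no_notation (ASCII) subset_mset (infix \<open><#\<close> 50)

lemma countable_finite_exhaustion:
  assumes "countable A"
  obtains F :: "nat \<Rightarrow> 'a set" where "incseq F" "\<And>k. finite (F k)" "\<And>k. F k \<subseteq> A"
    "\<And>B. finite B \<Longrightarrow> B \<subseteq> A \<Longrightarrow> \<exists>k. B \<subseteq> F k"
proof (cases "A = {}")
  case True
  then show ?thesis by (intro that[of "\<lambda>_. {}"]) (auto simp: incseq_def)
next
  case False
  define f where "f = from_nat_into A"
  have range_f: "range f = A" unfolding f_def using range_from_nat_into[OF False assms] .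
  show ?thesis
  proof (rule that[of "\<lambda>k. f ` {..<k}"])
    show "incseq (\<lambda>k. f ` {..<k})" by (auto simp: incseq_def)
    show "finite (f ` {..<k})" "f ` {..<k} \<subseteq> A" for k using range_f by auto
    fix B assume "finite B" "B \<subseteq> A"
    then obtain J where J: "finite J" "B = f ` J"
      using finite_subset_image[of B f UNIV] range_f by auto
    then have "B \<subseteq> f ` {..<Suc (Max (insert 0 J))}" by (auto simp: less_Suc_eq_le)
    then show "\<exists>k. B \<subseteq> f ` {..<k}" by blast
  qed
qed

lemma coprime_of_int_powers:
  assumes "coprime (a :: int) b" "int m = a ^ j" "int m' = b ^ k"
  shows "coprime m m'"
proof -
  have "coprime (int m) (int m')" using assms by simp
  then show ?thesis by simp
qed

lemma comeager_in_countable_Inter: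
  assumes countable: "countable Us"
    and open_dense: "\<And>U. U \<in> Us \<Longrightarrow> openin T U \<and> T closure_of U = topspace T"
    and sub: "topspace T \<inter> \<Inter>Us \<subseteq> A"
  shows "comeager_in T A"
proof -
  define U where "U = from_nat_into (insert (topspace T) Us)"
  have range_U: "range U = insert (topspace T) Us"
    unfolding U_def using countable by (intro range_from_nat_into) auto
  have "openin T (U n) \<and> T closure_of (U n) = topspace T" for n
    using range_U open_dense closure_of_topspace by (metis insertE openin_topspace rangeI)
  moreover have "(\<Inter>n. U n) \<subseteq> A"
    using range_U sub by auto
  ultimately show ?thesis unfolding comeager_in_def by blast
qed

lemma continuous_map_product_discrete_coordinate:
  assumes "i \<in> I" "\<phi> \<in> U i \<rightarrow> topspace Y"
  shows "continuous_map (product_topology (\<lambda>i. discrete_topology (U i)) I) Y (\<lambda>x. \<phi> (x i))"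
  using continuous_map_compose[OF continuous_map_product_projection[OF assms(1),
        of "\<lambda>i. discrete_topology (U i)"]
      continuous_map_from_discrete_topology[THEN iffD2, OF assms(2)]]
  by (simp add: o_def)

text \<open>The measures with densities \<open>indicator A\<close> and \<open>measure M A\<close> agree on the generator, hence
  everywhere; so \<open>A\<close> is independent of itself and \<open>measure M A = (measure M A)\<^sup>2\<close>.\<close>
lemma (in prob_space) measure_0_or_1_if_indep_generator:
  assumes E: "Int_stable E" "E \<subseteq> Pow (space M)" "space M \<in> E"
    and sets_eq: "sets M = sigma_sets (space M) E" and A: "A \<in> sets M"
    and indep: "\<And>C. C \<in> E \<Longrightarrow> measure M (A \<inter> C) = measure M A * measure M C"
  shows "measure M A = 0 \<or> measure M A = 1"
proof -
  let ?N1 = "density M (indicator A)" and ?N2 = "density M (\<lambda>_. ennreal (measure M A))"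
  have N1: "emeasure ?N1 C = ennreal (measure M (A \<inter> C))" if "C \<in> sets M" for C
    using that A
    by (simp add: emeasure_density nn_integral_indicator indicator_inter_arith[symmetric]
        emeasure_eq_measure)
  have N2: "emeasure ?N2 C = ennreal (measure M A * measure M C)" if "C \<in> sets M" for C
    using that
    by (simp add: emeasure_density nn_integral_cmult_indicator emeasure_eq_measure ennreal_mult)
  have E_sets: "C \<in> sets M" if "C \<in> E" for C
    using that sets_eq by auto
  have "?N1 = ?N2"
  proof (rule measure_eqI_generator_eq_countable[OF E(1,2), where A = "{space M}"])
    show "emeasure ?N1 C = emeasure ?N2 C" if "C \<in> E" for C
      using N1 N2 E_sets[OF that] indep[OF that] by simp
  qed (use E(3) sets_eq N1 in auto)
  then have "ennreal (measure M (A \<inter> A)) = ennreal (measure M A * measure M A)"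
    using N1[OF A] N2[OF A] by simp
  then have "measure M A = measure M A * measure M A" by (simp add: ennreal_inj)
  then show ?thesis by (metis mult_cancel_left1 mult_eq_0_iff)
qed

section \<open>Left cosets\<close>

text \<open>The image of a coset of \<open>K'\<close> under the projection \<open>G/K' \<rightarrow> G/K\<close>, for \<open>K' \<subseteq> K\<close>.\<close>
definition coset_proj :: "('a, 'c) monoid_scheme \<Rightarrow> 'a set \<Rightarrow> 'a set \<Rightarrow> 'a set" where
  "coset_proj G K q = (\<Union>g\<in>q. g <#\<^bsub>G\<^esub> K)"

definition fixed_lcosets :: "('a, 'c) monoid_scheme \<Rightarrow> 'a set \<Rightarrow> 'a set \<Rightarrow> 'a set set" where
  "fixed_lcosets G S K = {q \<in> lcosets\<^bsub>G\<^esub> K. \<forall>s\<in>S. s <#\<^bsub>G\<^esub> q = q}"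

context group
begin

lemma lcosets_l_coset: "a \<in> carrier G \<Longrightarrow> a <# K \<in> lcosets K"
  unfolding LCOSETS_def by blast

lemma lcosetsE:
  assumes "q \<in> lcosets K"
  obtains a where "a \<in> carrier G" "q = a <# K"
  using assms unfolding LCOSETS_def by blast

lemma l_coset_eq_iff:
  assumes K: "subgroup K G" and a: "a \<in> carrier G" and b: "b \<in> carrier G"
  shows "a <# K = b <# K \<longleftrightarrow> inv a \<otimes> b \<in> K"
proof
  assume "a <# K = b <# K"
  then have "b \<in> a <# K" using lcos_self[OF b K] by simp
  then show "inv a \<otimes> b \<in> K" using subgroup.lcos_module_imp[OF K is_group a] by blast
next
  assume "inv a \<otimes> b \<in> K"
  then have "b \<in> a <# K" using subgroup.lcos_module_rev[OF K is_group a b] by blast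
  then show "a <# K = b <# K" using K a by (metis l_repr_independence)
qed

lemma l_coset_fixed_iff:
  assumes K: "subgroup K G" and s: "s \<in> carrier G" and a: "a \<in> carrier G"
  shows "s <# (a <# K) = a <# K \<longleftrightarrow> inv a \<otimes> s \<otimes> a \<in> K"
  using l_coset_eq_iff[OF K a, of "s \<otimes> a"] lcos_m_assoc[OF subgroup.subset[OF K] s a] s a
  by (auto simp: m_assoc)

lemma l_coset_inv_cancel: "A \<subseteq> carrier G \<Longrightarrow> g \<in> carrier G \<Longrightarrow> inv g <# (g <# A) = A"
  by (simp add: lcos_m_assoc lcos_mult_one)

lemma l_coset_translate_lcosets:
  "subgroup K G \<Longrightarrow> g \<in> carrier G \<Longrightarrow> q \<in> lcosets K \<Longrightarrow> g <# q \<in> lcosets K"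
  by (metis lcosetsE lcosets_l_coset lcos_m_assoc m_closed subgroup.subset)

lemma bij_betw_l_coset_lcosets:
  assumes K: "subgroup K G" and g: "g \<in> carrier G"
  shows "bij_betw (\<lambda>q. g <# q) (lcosets K) (lcosets K)"
proof (rule bij_betw_byWitness[where f' = "\<lambda>q. inv g <# q"])
  have "q \<subseteq> carrier G" if "q \<in> lcosets K" for q
    using that K subgroup.lcosets_carrier is_group by blast
  then show "\<forall>q\<in>lcosets K. inv g <# (g <# q) = q" "\<forall>q\<in>lcosets K. g <# (inv g <# q) = q"
    using l_coset_inv_cancel g inv_closed inv_inv by metis+
qed (use l_coset_translate_lcosets[OF K] g in auto)


lemma coset_proj_l_coset:
  assumes "subgroup K' G" "subgroup K G" "K' \<subseteq> K" "a \<in> carrier G"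
  shows "coset_proj G K (a <# K') = a <# K"
proof -
  have "g <# K = a <# K" if "g \<in> a <# K'" for g
  proof -
    have "g \<in> a <# K" using that assms(3) unfolding l_coset_def by blast
    then show ?thesis using l_repr_independence assms(2,4) by metis
  qed
  moreover have "a \<in> a <# K'"
    using assms lcos_self by blast
  ultimately show ?thesis unfolding coset_proj_def by blast
qed

lemma coset_proj_lcosets:
  assumes K': "subgroup K' G" and K: "subgroup K G" and sub: "K' \<subseteq> K" and q: "q \<in> lcosets K'"
  shows "coset_proj G K q \<in> lcosets K"
proof -
  obtain a where "a \<in> carrier G" "q = a <# K'" using q by (rule lcosetsE)
  then show ?thesis using coset_proj_l_coset[OF K' K sub] lcosets_l_coset by simp
qed

lemma coset_proj_l_coset_translate:
  assumes K': "subgroup K' G" and K: "subgroup K G" and sub: "K' \<subseteq> K"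
    and g: "g \<in> carrier G" and q: "q \<in> lcosets K'"
  shows "coset_proj G K (g <# q) = g <# coset_proj G K q"
proof -
  obtain a where a: "a \<in> carrier G" "q = a <# K'" using q by (rule lcosetsE)
  then show ?thesis
    using coset_proj_l_coset[OF K' K sub] g lcos_m_assoc subgroup.subset[OF K] subgroup.subset[OF K']
    by simp
qed

lemma lcosets_eq_coset_proj_image:
  assumes K': "subgroup K' G" and K: "subgroup K G" and sub: "K' \<subseteq> K"
  shows "lcosets K = coset_proj G K ` (lcosets K')"
proof
  show "lcosets K \<subseteq> coset_proj G K ` (lcosets K')"
  proof
    fix Q assume "Q \<in> lcosets K"
    then obtain a where "a \<in> carrier G" "Q = a <# K" by (rule lcosetsE)
    then show "Q \<in> coset_proj G K ` (lcosets K')"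
      using coset_proj_l_coset[OF K' K sub] lcosets_l_coset by (metis image_eqI)
  qed
next
  show "coset_proj G K ` (lcosets K') \<subseteq> lcosets K"
    by (rule image_subsetI) (rule coset_proj_lcosets[OF K' K sub])
qed

lemma finite_lcosets_mono:
  "subgroup K' G \<Longrightarrow> subgroup K G \<Longrightarrow> K' \<subseteq> K \<Longrightarrow> finite (lcosets K') \<Longrightarrow> finite (lcosets K)"
  by (metis lcosets_eq_coset_proj_image finite_imageI)

text \<open>All fibres of the projection \<open>G/K' \<rightarrow> G/K\<close> are translates of the fibre over \<open>K\<close>.\<close>
lemma card_coset_proj_fibre:
  assumes K': "subgroup K' G" and K: "subgroup K G" and sub: "K' \<subseteq> K" and Q: "Q \<in> lcosets K"
  shows "card {q \<in> lcosets K'. coset_proj G K q = Q} = card {q \<in> lcosets K'. coset_proj G K q = K}"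
proof -
  obtain b where b: "b \<in> carrier G" "Q = b <# K" using Q by (rule lcosetsE)
  have K_eq: "inv b <# Q = K"
    using b K by (simp add: l_coset_inv_cancel subgroup.subset)
  have "bij_betw (\<lambda>q. inv b <# q) {q \<in> lcosets K'. coset_proj G K q = Q}
                                  {q \<in> lcosets K'. coset_proj G K q = K}"
  proof (rule bij_betw_subset[OF bij_betw_l_coset_lcosets[OF K' inv_closed[OF b(1)]]])
    show "(\<lambda>q. inv b <# q) ` {q \<in> lcosets K'. coset_proj G K q = Q} =
          {q \<in> lcosets K'. coset_proj G K q = K}"
    proof (intro equalityI subsetI)
      fix r assume "r \<in> (\<lambda>q. inv b <# q) ` {q \<in> lcosets K'. coset_proj G K q = Q}"
      then show "r \<in> {q \<in> lcosets K'. coset_proj G K q = K}"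
        using coset_proj_l_coset_translate[OF K' K sub] l_coset_translate_lcosets[OF K'] b K_eq
        by auto
    next
      fix r assume r: "r \<in> {q \<in> lcosets K'. coset_proj G K q = K}"
      have "b <# r \<in> lcosets K'" "coset_proj G K (b <# r) = Q"
        using r b coset_proj_l_coset_translate[OF K' K sub] l_coset_translate_lcosets[OF K'] by auto
      moreover have "r = inv b <# (b <# r)"
        using r b K' subgroup.lcosets_carrier is_group l_coset_inv_cancel by (metis mem_Collect_eq)
      ultimately show "r \<in> (\<lambda>q. inv b <# q) ` {q \<in> lcosets K'. coset_proj G K q = Q}"
        by blast
    qed
  qed auto
  then show ?thesis by (rule bij_betw_same_card)
qed

lemma card_coset_proj_vimage:
  assumes K': "subgroup K' G" and K: "subgroup K G" and sub: "K' \<subseteq> K"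
    and fin: "finite (lcosets K')" and B: "B \<subseteq> lcosets K"
  shows "card {q \<in> lcosets K'. coset_proj G K q \<in> B} =
         card B * card {q \<in> lcosets K'. coset_proj G K q = K}"
proof -
  have "finite B" using B finite_lcosets_mono[OF K' K sub fin] finite_subset by blast
  have "{q \<in> lcosets K'. coset_proj G K q \<in> B} = (\<Union>Q\<in>B. {q \<in> lcosets K'. coset_proj G K q = Q})"
    by blast
  then have "card {q \<in> lcosets K'. coset_proj G K q \<in> B} =
             (\<Sum>Q\<in>B. card {q \<in> lcosets K'. coset_proj G K q = Q})"
    using \<open>finite B\<close> fin by (auto intro!: card_UN_disjoint)
  also have "\<dots> = (\<Sum>Q\<in>B. card {q \<in> lcosets K'. coset_proj G K q = K})"
    using card_coset_proj_fibre[OF K' K sub] B by (intro sum.cong) auto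
  finally show ?thesis by simp
qed

lemma card_lcosets_dvd:
  assumes K': "subgroup K' G" and K: "subgroup K G" and sub: "K' \<subseteq> K" and fin: "finite (lcosets K')"
  shows "card (lcosets K) dvd card (lcosets K')"
proof -
  have "{q \<in> lcosets K'. coset_proj G K q \<in> lcosets K} = lcosets K'"
    using coset_proj_lcosets[OF K' K sub] by auto
  then have "card (lcosets K') = card (lcosets K) * card {q \<in> lcosets K'. coset_proj G K q = K}"
    using card_coset_proj_vimage[OF K' K sub fin order_refl] by simp
  then show ?thesis by simp
qed

lemma l_coset_in_fixed_lcosets_iff:
  assumes K: "subgroup K G" and S: "S \<subseteq> carrier G" and a: "a \<in> carrier G"
  shows "a <# K \<in> fixed_lcosets G S K \<longleftrightarrow> (\<forall>s\<in>S. inv a \<otimes> s \<otimes> a \<in> K)"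
  unfolding fixed_lcosets_def using lcosets_l_coset[OF a] l_coset_fixed_iff[OF K _ a] S
  by (auto simp: subset_iff)

lemma l_coset_carrier_eq: "a \<in> carrier G \<Longrightarrow> a <# carrier G = carrier G"
  using l_coset_eq_iff[OF subgroup_self _ one_closed, of a] lcos_mult_one by simp

lemma lcosets_carrier_eq: "lcosets (carrier G) = {carrier G}"
  unfolding LCOSETS_def using l_coset_carrier_eq by auto

lemma fixed_lcosets_carrier_eq: "S \<subseteq> carrier G \<Longrightarrow> fixed_lcosets G S (carrier G) = {carrier G}"
  unfolding fixed_lcosets_def lcosets_carrier_eq using l_coset_carrier_eq by auto

context
  fixes A B :: "'a set"
  assumes A: "subgroup A G" and B: "subgroup B G"
begin

private lemma subgroup_Int: "subgroup (A \<inter> B) G"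
  using A B by (rule subgroups_Inter_pair)

lemma coset_proj_pair_l_coset:
  "a \<in> carrier G \<Longrightarrow> (coset_proj G A (a <# (A \<inter> B)), coset_proj G B (a <# (A \<inter> B))) = (a <# A, a <# B)"
  using coset_proj_l_coset[OF subgroup_Int A Int_lower1] coset_proj_l_coset[OF subgroup_Int B Int_lower2]
  by simp

lemma inj_on_coset_proj_pair:
  "inj_on (\<lambda>q. (coset_proj G A q, coset_proj G B q)) (lcosets (A \<inter> B))"
proof (rule inj_onI)
  fix p q
  assume p: "p \<in> lcosets (A \<inter> B)" and q: "q \<in> lcosets (A \<inter> B)"
    and eq: "(coset_proj G A p, coset_proj G B p) = (coset_proj G A q, coset_proj G B q)"
  obtain a where a: "a \<in> carrier G" "p = a <# (A \<inter> B)" using p by (rule lcosetsE)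
  obtain b where b: "b \<in> carrier G" "q = b <# (A \<inter> B)" using q by (rule lcosetsE)
  have "a <# A = b <# A" "a <# B = b <# B"
    using eq coset_proj_pair_l_coset[OF a(1)] coset_proj_pair_l_coset[OF b(1)] a(2) b(2) by auto
  then have "inv a \<otimes> b \<in> A \<inter> B"
    using l_coset_eq_iff[OF A a(1) b(1)] l_coset_eq_iff[OF B a(1) b(1)] by blast
  then show "p = q" using l_coset_eq_iff[OF subgroup_Int a(1) b(1)] a(2) b(2) by simp
qed

lemma coset_proj_pair_lcosets:
  "(\<lambda>q. (coset_proj G A q, coset_proj G B q)) ` (lcosets (A \<inter> B)) \<subseteq> (lcosets A) \<times> (lcosets B)"
  using coset_proj_lcosets[OF subgroup_Int A Int_lower1] coset_proj_lcosets[OF subgroup_Int B Int_lower2]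
  by auto

lemma finite_lcosets_Int:
  assumes "finite (lcosets A)" "finite (lcosets B)"
  shows "finite (lcosets (A \<inter> B))"
proof -
  have "finite ((\<lambda>q. (coset_proj G A q, coset_proj G B q)) ` (lcosets (A \<inter> B)))"
    using finite_subset[OF coset_proj_pair_lcosets] assms by blast
  then show ?thesis by (rule finite_imageD[OF _ inj_on_coset_proj_pair])
qed

text \<open>The Chinese remainder theorem for cosets: both indices divide the index of \<open>A \<inter> B\<close>, so the
  injection is onto by counting.\<close>
lemma bij_betw_coset_proj_pair:
  assumes finA: "finite (lcosets A)" and finB: "finite (lcosets B)"
    and coprime: "coprime (card (lcosets A)) (card (lcosets B))"
  shows "bij_betw (\<lambda>q. (coset_proj G A q, coset_proj G B q)) (lcosets (A \<inter> B)) ((lcosets A) \<times> (lcosets B))"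
proof -
  let ?\<Phi> = "\<lambda>q. (coset_proj G A q, coset_proj G B q)"
  have fin: "finite (lcosets (A \<inter> B))" using finite_lcosets_Int[OF finA finB] .
  have "card (lcosets A) * card (lcosets B) dvd card (lcosets (A \<inter> B))"
    using card_lcosets_dvd[OF subgroup_Int A Int_lower1 fin]
      card_lcosets_dvd[OF subgroup_Int B Int_lower2 fin] coprime
    by (simp add: divides_mult)
  moreover have "card (lcosets (A \<inter> B)) > 0"
    using fin lcosets_l_coset[OF one_closed] card_gt_0_iff by blast
  moreover have "card (lcosets (A \<inter> B)) \<le> card (lcosets A) * card (lcosets B)"
    using card_inj_on_le[OF inj_on_coset_proj_pair coset_proj_pair_lcosets] finA finB
    by (simp add: card_cartesian_product)
  ultimately have "card (?\<Phi> ` (lcosets (A \<inter> B))) = card ((lcosets A) \<times> (lcosets B))"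
    by (simp add: card_image[OF inj_on_coset_proj_pair] card_cartesian_product dvd_imp_le le_antisym)
  then have "?\<Phi> ` (lcosets (A \<inter> B)) = (lcosets A) \<times> (lcosets B)"
    using card_subset_eq[OF _ coset_proj_pair_lcosets] finA finB by blast
  then show ?thesis using inj_on_coset_proj_pair by (simp add: bij_betw_def)
qed

lemma card_lcosets_Int_coprime:
  assumes "finite (lcosets A)" "finite (lcosets B)" "coprime (card (lcosets A)) (card (lcosets B))"
  shows "card (lcosets (A \<inter> B)) = card (lcosets A) * card (lcosets B)"
  using bij_betw_same_card[OF bij_betw_coset_proj_pair[OF assms]] by (simp add: card_cartesian_product)

lemma l_coset_Int_in_fixed_lcosets_iff:
  assumes S: "S \<subseteq> carrier G" and a: "a \<in> carrier G"
  shows "a <# (A \<inter> B) \<in> fixed_lcosets G S (A \<inter> B) \<longleftrightarrow>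
    a <# A \<in> fixed_lcosets G S A \<and> a <# B \<in> fixed_lcosets G S B"
  using l_coset_in_fixed_lcosets_iff[OF _ S a] subgroup_Int A B by auto

lemma coset_proj_pair_fixed_lcosets:
  assumes finA: "finite (lcosets A)" and finB: "finite (lcosets B)"
    and coprime: "coprime (card (lcosets A)) (card (lcosets B))" and S: "S \<subseteq> carrier G"
  shows "(\<lambda>q. (coset_proj G A q, coset_proj G B q)) ` fixed_lcosets G S (A \<inter> B) =
    fixed_lcosets G S A \<times> fixed_lcosets G S B"
    (is "?\<Phi> ` _ = _")
proof (intro equalityI subsetI)
  fix r assume "r \<in> ?\<Phi> ` fixed_lcosets G S (A \<inter> B)"
  then obtain p where p: "p \<in> fixed_lcosets G S (A \<inter> B)" "r = ?\<Phi> p" by blast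
  then have "p \<in> lcosets (A \<inter> B)" unfolding fixed_lcosets_def by blast
  then obtain a where "a \<in> carrier G" "p = a <# (A \<inter> B)" by (rule lcosetsE)
  with p show "r \<in> fixed_lcosets G S A \<times> fixed_lcosets G S B"
    using l_coset_Int_in_fixed_lcosets_iff[OF S] coset_proj_pair_l_coset by auto
next
  fix r assume r: "r \<in> fixed_lcosets G S A \<times> fixed_lcosets G S B"
  then have "r \<in> ?\<Phi> ` (lcosets (A \<inter> B))"
    using bij_betw_coset_proj_pair[OF finA finB coprime]
    unfolding bij_betw_def fixed_lcosets_def by auto
  then obtain p where p: "p \<in> lcosets (A \<inter> B)" "r = ?\<Phi> p" by blast
  obtain a where a: "a \<in> carrier G" "p = a <# (A \<inter> B)" using p(1) by (rule lcosetsE)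
  then have "a <# (A \<inter> B) \<in> fixed_lcosets G S (A \<inter> B)"
    using r p(2) l_coset_Int_in_fixed_lcosets_iff[OF S] coset_proj_pair_l_coset by auto
  then show "r \<in> ?\<Phi> ` fixed_lcosets G S (A \<inter> B)" using a(2) p(2) by blast
qed

lemma card_fixed_lcosets_Int_coprime:
  assumes finA: "finite (lcosets A)" and finB: "finite (lcosets B)"
    and coprime: "coprime (card (lcosets A)) (card (lcosets B))" and S: "S \<subseteq> carrier G"
  shows "card (fixed_lcosets G S (A \<inter> B)) = card (fixed_lcosets G S A) * card (fixed_lcosets G S B)"
proof -
  have "fixed_lcosets G S (A \<inter> B) \<subseteq> lcosets (A \<inter> B)"
    unfolding fixed_lcosets_def by blast
  then have "bij_betw (\<lambda>q. (coset_proj G A q, coset_proj G B q)) (fixed_lcosets G S (A \<inter> B))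
      (fixed_lcosets G S A \<times> fixed_lcosets G S B)"
    using bij_betw_subset[OF bij_betw_coset_proj_pair[OF finA finB coprime]]
      coset_proj_pair_fixed_lcosets[OF assms] by blast
  then show ?thesis by (simp add: bij_betw_same_card card_cartesian_product)
qed

end

end

section \<open>The inverse limit of the coset spaces\<close>

locale coset_inverse_system = group G for G :: "('a, 'c) monoid_scheme" (structure) +
  fixes H :: "'a \<Rightarrow> 'a set"
  assumes countable_carrier: "countable (carrier G)"
    and subgroup_H: "\<gamma> \<in> carrier G - {\<one>} \<Longrightarrow> subgroup (H \<gamma>) G"
    and finite_lcosets_H: "\<gamma> \<in> carrier G - {\<one>} \<Longrightarrow> finite (lcosets (H \<gamma>))"
begin

abbreviation K :: "'a set \<Rightarrow> 'a set" where "K \<equiv> sub_int G H"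
abbreviation X :: "'a set \<Rightarrow> 'a set set" where "X \<equiv> XF G H"
abbreviation \<Omega> :: "('a set \<Rightarrow> 'a set) set" where "\<Omega> \<equiv> inv_lim G H"
abbreviation act :: "'a \<Rightarrow> ('a set \<Rightarrow> 'a set) \<Rightarrow> ('a set \<Rightarrow> 'a set)" where "act \<equiv> inv_lim_act G"

lemma fin_index_iff: "F \<in> fin_index G \<longleftrightarrow> finite F \<and> F \<subseteq> carrier G - {\<one>}"
  by (simp add: fin_index_def)

lemma sub_int_empty: "K {} = carrier G"
  by (simp add: sub_int_def)

lemma sub_int_insert: "K (insert \<gamma> F) = K F \<inter> H \<gamma>"
  unfolding sub_int_def by blast

lemma sub_int_singleton: "\<gamma> \<in> carrier G - {\<one>} \<Longrightarrow> K {\<gamma>} = H \<gamma>"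
  unfolding sub_int_def using subgroup.subset[OF subgroup_H] by blast

lemma sub_int_antimono: "F \<subseteq> F' \<Longrightarrow> K F' \<subseteq> K F"
  unfolding sub_int_def by blast

lemma subgroup_sub_int: "F \<subseteq> carrier G - {\<one>} \<Longrightarrow> subgroup (K F) G"
proof -
  have "K F = \<Inter> (insert (carrier G) (H ` F))" by (auto simp: sub_int_def)
  moreover assume "F \<subseteq> carrier G - {\<one>}"
  then have "subgroup (\<Inter> (insert (carrier G) (H ` F))) G"
    using subgroup_self subgroup_H by (intro subgroups_Inter) auto
  ultimately show ?thesis by simp
qed

lemma subgroup_sub_int_fin_index: "F \<in> fin_index G \<Longrightarrow> subgroup (K F) G"
  by (simp add: fin_index_iff subgroup_sub_int)

lemma finite_lcosets_sub_int: "finite F \<Longrightarrow> F \<subseteq> carrier G - {\<one>} \<Longrightarrow> finite (lcosets (K F))"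
proof (induction F rule: finite_induct)
  case empty
  then show ?case by (simp add: sub_int_empty lcosets_carrier_eq)
next
  case (insert \<gamma> F)
  then show ?case
    unfolding sub_int_insert
    using finite_lcosets_Int[OF subgroup_sub_int subgroup_H] finite_lcosets_H by auto
qed

lemma finite_XF: "F \<in> fin_index G \<Longrightarrow> finite (X F)"
  unfolding XF_def fin_index_iff using finite_lcosets_sub_int by blast

lemma XF_l_coset: "a \<in> carrier G \<Longrightarrow> a <# K F \<in> X F"
  unfolding XF_def by (rule lcosets_l_coset)

lemma XF_E:
  assumes "q \<in> X F"
  obtains a where "a \<in> carrier G" "q = a <# K F"
  using assms unfolding XF_def by (rule lcosetsE)

lemma XF_subset_carrier: "F \<in> fin_index G \<Longrightarrow> q \<in> X F \<Longrightarrow> q \<subseteq> carrier G"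
  unfolding XF_def using subgroup.lcosets_carrier[OF subgroup_sub_int_fin_index is_group] by blast

lemma XF_translate: "F \<in> fin_index G \<Longrightarrow> g \<in> carrier G \<Longrightarrow> q \<in> X F \<Longrightarrow> g <# q \<in> X F"
  unfolding XF_def by (rule l_coset_translate_lcosets[OF subgroup_sub_int_fin_index])

lemma card_XF_pos: "F \<in> fin_index G \<Longrightarrow> card (X F) > 0"
  using finite_XF XF_l_coset[OF one_closed] card_gt_0_iff by blast

lemma inv_lim_subset_PiE: "\<Omega> \<subseteq> (\<Pi>\<^sub>E F\<in>fin_index G. X F)"
  unfolding inv_lim_def by (rule Collect_subset)

lemma inv_lim_in_XF: "x \<in> \<Omega> \<Longrightarrow> F \<in> fin_index G \<Longrightarrow> x F \<in> X F"
  unfolding inv_lim_def by blast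

lemma inv_lim_undefined: "x \<in> \<Omega> \<Longrightarrow> F \<notin> fin_index G \<Longrightarrow> x F = undefined"
  unfolding inv_lim_def by blast

lemma inv_lim_compat:
  assumes x: "x \<in> \<Omega>" and F: "F \<in> fin_index G" "F' \<in> fin_index G" "F \<subseteq> F'"
    and a: "a \<in> carrier G" "x F' = a <# K F'"
  shows "x F = a <# K F"
proof -
  have "a \<in> x F'" using a lcos_self subgroup_sub_int_fin_index[OF F(2)] by simp
  then show ?thesis using x F unfolding inv_lim_def by blast
qed

lemma inv_lim_coset_proj:
  assumes x: "x \<in> \<Omega>" and F: "F \<in> fin_index G" "F' \<in> fin_index G" "F \<subseteq> F'"
  shows "x F = coset_proj G (K F) (x F')"
proof -
  obtain a where a: "a \<in> carrier G" "x F' = a <# K F'"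
    using inv_lim_in_XF[OF x F(2)] by (rule XF_E)
  then show ?thesis
    using inv_lim_compat[OF x F a] coset_proj_l_coset[OF subgroup_sub_int_fin_index[OF F(2)]
        subgroup_sub_int_fin_index[OF F(1)] sub_int_antimono[OF F(3)]]
    by simp
qed

lemma inv_limI:
  assumes x: "x \<in> (\<Pi>\<^sub>E F\<in>fin_index G. X F)"
    and coherent: "\<And>F F'. F \<in> fin_index G \<Longrightarrow> F' \<in> fin_index G \<Longrightarrow> F \<subseteq> F' \<Longrightarrow>
      x F = coset_proj G (K F) (x F')"
  shows "x \<in> \<Omega>"
proof -
  have "x F = g <# K F"
    if F: "F \<in> fin_index G" "F' \<in> fin_index G" "F \<subseteq> F'" and g: "g \<in> x F'" for F F' g
  proof -
    have "x F' \<in> X F'" using x F(2) by (rule PiE_mem)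
    then obtain a where a: "a \<in> carrier G" "x F' = a <# K F'" by (rule XF_E)
    have KF: "subgroup (K F) G" using subgroup_sub_int_fin_index[OF F(1)] .
    have "x F = a <# K F"
      using coherent[OF F] a
        coset_proj_l_coset[OF subgroup_sub_int_fin_index[OF F(2)] KF sub_int_antimono[OF F(3)]]
      by simp
    moreover have "g \<in> a <# K F"
      using g a sub_int_antimono[OF F(3)] unfolding l_coset_def by blast
    ultimately show ?thesis using l_repr_independence[OF _ a(1) KF] by simp
  qed
  then show ?thesis using x unfolding inv_lim_def by blast
qed

definition coset_point :: "'a \<Rightarrow> 'a set \<Rightarrow> 'a set" where
  "coset_point a = (\<lambda>F\<in>fin_index G. a <# K F)"

lemma coset_point_apply: "F \<in> fin_index G \<Longrightarrow> coset_point a F = a <# K F"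
  by (simp add: coset_point_def)

lemma coset_point_in_inv_lim:
  assumes a: "a \<in> carrier G"
  shows "coset_point a \<in> \<Omega>"
proof (rule inv_limI)
  show "coset_point a \<in> (\<Pi>\<^sub>E F\<in>fin_index G. X F)"
    unfolding coset_point_def using XF_l_coset[OF a] by simp
  fix F F' assume F: "F \<in> fin_index G" "F' \<in> fin_index G" "F \<subseteq> F'"
  show "coset_point a F = coset_proj G (K F) (coset_point a F')"
    using F coset_proj_l_coset[OF subgroup_sub_int_fin_index[OF F(2)] subgroup_sub_int_fin_index[OF F(1)]
        sub_int_antimono[OF F(3)] a]
    by (simp add: coset_point_apply)
qed

lemma inv_lim_act_apply: "F \<in> fin_index G \<Longrightarrow> act g x F = g <# x F"
  by (simp add: inv_lim_act_def)

lemma inv_lim_act_closed: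
  assumes g: "g \<in> carrier G" and x: "x \<in> \<Omega>"
  shows "act g x \<in> \<Omega>"
proof (rule inv_limI)
  show "act g x \<in> (\<Pi>\<^sub>E F\<in>fin_index G. X F)"
    using XF_translate[OF _ g] inv_lim_in_XF[OF x] by (auto simp: inv_lim_act_def)
  fix F F' assume F: "F \<in> fin_index G" "F' \<in> fin_index G" "F \<subseteq> F'"
  show "act g x F = coset_proj G (K F) (act g x F')"
    using inv_lim_coset_proj[OF x F] inv_lim_in_XF[OF x F(2)] inv_lim_act_apply F
      coset_proj_l_coset_translate[OF subgroup_sub_int_fin_index[OF F(2)]
        subgroup_sub_int_fin_index[OF F(1)] sub_int_antimono[OF F(3)] g]
    unfolding XF_def by simp
qed

lemma inv_lim_act_one:
  assumes x: "x \<in> \<Omega>"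
  shows "act \<one> x = x"
proof
  fix F show "act \<one> x F = x F"
    using inv_lim_undefined[OF x] XF_subset_carrier[OF _ inv_lim_in_XF[OF x]] lcos_mult_one
    by (cases "F \<in> fin_index G") (auto simp: inv_lim_act_def)
qed

lemma inv_lim_act_mult:
  assumes "g \<in> carrier G" "h \<in> carrier G" "x \<in> \<Omega>"
  shows "act (g \<otimes> h) x = act g (act h x)"
proof
  fix F show "act (g \<otimes> h) x F = act g (act h x) F"
    using assms XF_subset_carrier[OF _ inv_lim_in_XF] lcos_m_assoc
    by (cases "F \<in> fin_index G") (auto simp: inv_lim_act_def)
qed

lemma inv_lim_act_inv: "g \<in> carrier G \<Longrightarrow> x \<in> \<Omega> \<Longrightarrow> act (inv g) (act g x) = x"
  by (metis inv_lim_act_mult inv_lim_act_one inv_closed l_inv)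

section \<open>Topology of the inverse limit\<close>

abbreviation P :: "('a set \<Rightarrow> 'a set) topology" where
  "P \<equiv> product_topology (\<lambda>F. discrete_topology (X F)) (fin_index G)"

abbreviation T :: "('a set \<Rightarrow> 'a set) topology" where
  "T \<equiv> inv_lim_top G H"

lemma topspace_inv_lim_top: "topspace T = \<Omega>"
  unfolding inv_lim_top_def using inv_lim_subset_PiE by auto

definition cylinder :: "'a set \<Rightarrow> 'a set set \<Rightarrow> ('a set \<Rightarrow> 'a set) set" where
  "cylinder F B = {x \<in> \<Omega>. x F \<in> B}"

lemma continuous_map_inv_lim_top_coordinate:
  "F \<in> fin_index G \<Longrightarrow> \<phi> \<in> X F \<rightarrow> topspace Y \<Longrightarrow> continuous_map T Y (\<lambda>x. \<phi> (x F))"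
  unfolding inv_lim_top_def
  by (intro continuous_map_from_subtopology continuous_map_product_discrete_coordinate)

lemma openin_cylinder:
  assumes F: "F \<in> fin_index G"
  shows "openin T (cylinder F B)"
proof -
  have "continuous_map T (discrete_topology (X F)) (\<lambda>x. x F)"
    using continuous_map_inv_lim_top_coordinate[OF F, of id] by simp
  then have "openin T {x \<in> topspace T. x F \<in> B \<inter> X F}"
    by (rule openin_continuous_map_preimage) simp
  moreover have "{x \<in> topspace T. x F \<in> B \<inter> X F} = cylinder F B"
    unfolding topspace_inv_lim_top cylinder_def using inv_lim_in_XF[OF _ F] by blast
  ultimately show ?thesis by simp
qed

lemma closedin_cylinder:
  assumes F: "F \<in> fin_index G"
  shows "closedin T (cylinder F B)"
proof -
  have "topspace T - cylinder F B = cylinder F (X F - B)"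
    unfolding topspace_inv_lim_top cylinder_def using inv_lim_in_XF[OF _ F] by blast
  moreover have "cylinder F B \<subseteq> topspace T"
    unfolding topspace_inv_lim_top cylinder_def by blast
  ultimately show ?thesis unfolding closedin_def using openin_cylinder[OF F] by simp
qed

lemma cylinder_basis:
  assumes U: "openin T U" and z: "z \<in> U"
  shows "\<exists>F\<in>fin_index G. cylinder F {z F} \<subseteq> U"
proof -
  obtain V where V: "openin P V" "U = V \<inter> \<Omega>"
    using U unfolding inv_lim_top_def openin_subtopology by blast
  have z\<Omega>: "z \<in> \<Omega>" using V z by blast
  obtain W where W: "finite {F \<in> fin_index G. W F \<noteq> X F}"
      "z \<in> Pi\<^sub>E (fin_index G) W" "Pi\<^sub>E (fin_index G) W \<subseteq> V"
    using V(1) z unfolding V(2) openin_product_topology_alt by auto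
  define F where "F = \<Union>{F \<in> fin_index G. W F \<noteq> X F}"
  have F_index: "F \<in> fin_index G"
    using W(1) unfolding F_def fin_index_iff by auto
  have in_W: "y \<in> Pi\<^sub>E (fin_index G) W" if y: "y \<in> cylinder F {z F}" for y
  proof -
    have y\<Omega>: "y \<in> \<Omega>" and yF: "y F = z F" using y unfolding cylinder_def by auto
    have "y F' \<in> W F'" if F': "F' \<in> fin_index G" for F'
    proof (cases "W F' = X F'")
      case True
      then show ?thesis using inv_lim_in_XF[OF y\<Omega> F'] by simp
    next
      case False
      then have "F' \<subseteq> F" using F' unfolding F_def by blast
      then have "y F' = z F'"
        using inv_lim_coset_proj[OF y\<Omega> F' F_index] inv_lim_coset_proj[OF z\<Omega> F' F_index] yF by simp
      then show ?thesis using W(2) F' by auto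
    qed
    then show ?thesis using inv_lim_undefined[OF y\<Omega>] by (intro PiE_I) auto
  qed
  have "cylinder F {z F} \<subseteq> U"
  proof
    fix y assume y: "y \<in> cylinder F {z F}"
    then have "y \<in> V" using in_W W(3) by blast
    moreover have "y \<in> \<Omega>" using y unfolding cylinder_def by blast
    ultimately show "y \<in> U" using V(2) by blast
  qed
  then show ?thesis using F_index by blast
qed

lemma closedin_inv_lim: "closedin P \<Omega>"
proof -
  define E where "E F F' = {x \<in> topspace P. x F = coset_proj G (K F) (x F')}" for F F'
  have coordinate: "continuous_map P (discrete_topology UNIV) (\<lambda>x. \<phi> (x F))"
    if "F \<in> fin_index G" for \<phi> :: "'a set \<Rightarrow> 'a set" and F
    using that by (intro continuous_map_product_discrete_coordinate) auto
  have closed: "closedin P (E F F')" if "F \<in> fin_index G" "F' \<in> fin_index G" for F F'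
    using closedin_continuous_maps_eq[OF Hausdorff_space_discrete_topology
        coordinate[OF that(1), of "\<lambda>q. q"] coordinate[OF that(2), of "coset_proj G (K F)"]]
    unfolding E_def by simp
  have eq: "\<Omega> = \<Inter> (insert (topspace P) {E F F' |F F'. F \<in> fin_index G \<and> F' \<in> fin_index G \<and> F \<subseteq> F'})"
  proof (intro equalityI subsetI)
    fix x assume x: "x \<in> \<Omega>"
    then have P: "x \<in> topspace P" using inv_lim_subset_PiE by auto
    have "x \<in> E F F'" if "F \<in> fin_index G" "F' \<in> fin_index G" "F \<subseteq> F'" for F F'
      unfolding E_def using P inv_lim_coset_proj[OF x that] by blast
    with P show "x \<in> \<Inter> (insert (topspace P) {E F F' |F F'. F \<in> fin_index G \<and> F' \<in> fin_index G \<and> F \<subseteq> F'})"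
      by blast
  next
    fix x assume x: "x \<in> \<Inter> (insert (topspace P) {E F F' |F F'. F \<in> fin_index G \<and> F' \<in> fin_index G \<and> F \<subseteq> F'})"
    then have "x \<in> (\<Pi>\<^sub>E F\<in>fin_index G. X F)" by auto
    moreover have "x \<in> E F F'" if "F \<in> fin_index G" "F' \<in> fin_index G" "F \<subseteq> F'" for F F'
      using x that by blast
    ultimately show "x \<in> \<Omega>" unfolding E_def by (intro inv_limI) blast+
  qed
  have "closedin P (\<Inter> (insert (topspace P)
      {E F F' |F F'. F \<in> fin_index G \<and> F' \<in> fin_index G \<and> F \<subseteq> F'}))"
    by (rule closedin_Inter) (use closed closedin_topspace[of P] in auto)
  then show ?thesis using eq by simp
qed

lemma compact_space_inv_lim_top: "compact_space T"
proof -
  have "compact_space P"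
    unfolding compact_space_product_topology using finite_XF compact_space_discrete_topology by blast
  then show ?thesis
    unfolding inv_lim_top_def using closedin_compact_space closedin_inv_lim compact_space_subtopology
    by blast
qed

lemma countable_fin_index: "countable (fin_index G)"
  using countable_Collect_finite_subset[OF countable_carrier]
  by (rule countable_subset[rotated]) (auto simp: fin_index_def)

lemma metrizable_space_inv_lim_top: "metrizable_space T"
proof -
  have "metrizable_space P"
    unfolding metrizable_space_product_topology
    using countable_subset[OF _ countable_fin_index] by auto
  then show ?thesis unfolding inv_lim_top_def by (rule metrizable_space_subtopology)
qed

lemma continuous_map_inv_lim_act:
  assumes g: "g \<in> carrier G"
  shows "continuous_map T T (act g)"
proof -
  have "continuous_map T P (act g)"
    unfolding continuous_map_componentwise
  proof (intro conjI ballI)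
    show "act g ` topspace T \<subseteq> extensional (fin_index G)"
      unfolding inv_lim_act_def by auto
    fix F assume F: "F \<in> fin_index G"
    have "continuous_map T (discrete_topology (X F)) (\<lambda>x. g <# x F)"
      using XF_translate[OF F g] by (intro continuous_map_inv_lim_top_coordinate[OF F]) auto
    then show "continuous_map T (discrete_topology (X F)) (\<lambda>x. act g x F)"
      using inv_lim_act_apply[OF F] by simp
  qed
  moreover have "act g ` topspace T \<subseteq> \<Omega>"
    using inv_lim_act_closed[OF g] topspace_inv_lim_top by auto
  ultimately show ?thesis
    unfolding inv_lim_top_def[of G H] by (auto simp: continuous_map_in_subtopology)
qed

lemma top_action_inv_lim: "top_action G T act"
  unfolding top_action_def topspace_inv_lim_top
proof (intro conjI ballI)
  fix g assume g: "g \<in> carrier G"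
  have "homeomorphic_maps T T (act g) (act (inv g))"
    unfolding homeomorphic_maps_def topspace_inv_lim_top
    using continuous_map_inv_lim_act g inv_lim_act_inv[OF g] inv_lim_act_inv[of "inv g"] by auto
  then show "homeomorphic_map T T (act g)"
    using homeomorphic_map_maps by blast
qed (auto simp: inv_lim_act_one inv_lim_act_mult)

lemma inv_lim_top_dense:
  assumes "S \<subseteq> \<Omega>" and meets: "\<And>F z. F \<in> fin_index G \<Longrightarrow> z \<in> \<Omega> \<Longrightarrow> \<exists>y\<in>S. y F = z F"
  shows "T closure_of S = topspace T"
proof (rule closure_of_subset_topspace[THEN antisym], rule subsetI)
  fix z assume z: "z \<in> topspace T"
  have "\<exists>y. y \<in> S \<and> y \<in> W" if W: "z \<in> W" "openin T W" for W
  proof -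
    obtain F where F: "F \<in> fin_index G" "cylinder F {z F} \<subseteq> W"
      using cylinder_basis[OF W(2,1)] by blast
    obtain y where "y \<in> S" "y F = z F" using meets[OF F(1)] z topspace_inv_lim_top by blast
    then show ?thesis using F(2) assms(1) unfolding cylinder_def by blast
  qed
  then show "z \<in> T closure_of S" using z by (simp add: in_closure_of)
qed

lemma minimal_action_inv_lim: "minimal_action G T act"
  unfolding minimal_action_def topspace_inv_lim_top
proof
  fix x assume x: "x \<in> \<Omega>"
  show "T closure_of (\<lambda>g. act g x) ` carrier G = \<Omega>"
  proof (rule inv_lim_top_dense[unfolded topspace_inv_lim_top])
    show "(\<lambda>g. act g x) ` carrier G \<subseteq> \<Omega>" using inv_lim_act_closed[OF _ x] by blast
    fix F z assume F: "F \<in> fin_index G" and z: "z \<in> \<Omega>"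
    obtain a where a: "a \<in> carrier G" "z F = a <# K F" using inv_lim_in_XF[OF z F] by (rule XF_E)
    obtain b where b: "b \<in> carrier G" "x F = b <# K F" using inv_lim_in_XF[OF x F] by (rule XF_E)
    have "act (a \<otimes> inv b) x F = z F"
      using a b inv_lim_act_apply[OF F] lcos_m_assoc subgroup.subset[OF subgroup_sub_int_fin_index[OF F]]
      by (simp add: m_assoc)
    then show "\<exists>y\<in>(\<lambda>g. act g x) ` carrier G. y F = z F" using a b by blast
  qed
qed

lemma openin_moved_points:
  assumes g: "g \<in> carrier G"
  shows "openin T {x \<in> \<Omega>. act g x \<noteq> x}"
proof -
  have "{x \<in> \<Omega>. act g x \<noteq> x} = (\<Union>F\<in>fin_index G. cylinder F {q. g <# q \<noteq> q})"
  proof (intro equalityI subsetI)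
    fix x assume x: "x \<in> {x \<in> \<Omega>. act g x \<noteq> x}"
    then obtain F where "act g x F \<noteq> x F" by (auto simp: fun_eq_iff)
    moreover from this have "F \<in> fin_index G"
      using x inv_lim_undefined unfolding inv_lim_act_def by fastforce
    ultimately show "x \<in> (\<Union>F\<in>fin_index G. cylinder F {q. g <# q \<noteq> q})"
      using x inv_lim_act_apply unfolding cylinder_def by auto
  next
    fix x assume "x \<in> (\<Union>F\<in>fin_index G. cylinder F {q. g <# q \<noteq> q})"
    then obtain F where F: "F \<in> fin_index G" and x: "x \<in> \<Omega>" "g <# x F \<noteq> x F"
      unfolding cylinder_def by blast
    then have "act g x F \<noteq> x F" by (simp add: inv_lim_act_apply)
    then show "x \<in> {x \<in> \<Omega>. act g x \<noteq> x}" using x(1) by auto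
  qed
  then show ?thesis using openin_cylinder by auto
qed

text \<open>A coset point \<open>a K\<^sub>F\<close> fixed by \<open>g \<noteq> \<one>\<close> in the coordinate \<open>{inv a \<otimes> g \<otimes> a}\<close> would put
  \<open>inv a \<otimes> g \<otimes> a\<close> into its own subgroup \<open>H\<close>.\<close>
lemma dense_moved_points:
  assumes notin_H: "\<And>\<gamma>. \<gamma> \<in> carrier G - {\<one>} \<Longrightarrow> \<gamma> \<notin> H \<gamma>"
    and g: "g \<in> carrier G" "g \<noteq> \<one>"
  shows "T closure_of {x \<in> \<Omega>. act g x \<noteq> x} = topspace T"
proof (rule inv_lim_top_dense)
  fix F z assume F: "F \<in> fin_index G" and z: "z \<in> \<Omega>"
  obtain a where a: "a \<in> carrier G" "z F = a <# K F" using inv_lim_in_XF[OF z F] by (rule XF_E)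
  define \<delta> where "\<delta> = inv a \<otimes> g \<otimes> a"
  have "g \<otimes> a \<noteq> a" using a(1) g by simp
  then have \<delta>: "\<delta> \<in> carrier G - {\<one>}"
    using a(1) g(1) inv_solve_left[of \<one> a "g \<otimes> a"] unfolding \<delta>_def by (auto simp: m_assoc)
  then have \<delta>_index: "{\<delta>} \<in> fin_index G" by (simp add: fin_index_iff)
  have "act g (coset_point a) {\<delta>} \<noteq> coset_point a {\<delta>}"
    using l_coset_fixed_iff[OF subgroup_H[OF \<delta>] g(1) a(1)] notin_H[OF \<delta>] \<delta>_def
      sub_int_singleton[OF \<delta>] inv_lim_act_apply[OF \<delta>_index] coset_point_apply[OF \<delta>_index]
    by simp
  then show "\<exists>y\<in>{x \<in> \<Omega>. act g x \<noteq> x}. y F = z F"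
    using coset_point_in_inv_lim[OF a(1)] coset_point_apply[OF F] a(2) by fastforce
qed auto

lemma comeager_free_points:
  assumes "\<And>\<gamma>. \<gamma> \<in> carrier G - {\<one>} \<Longrightarrow> \<gamma> \<notin> H \<gamma>"
  shows "comeager_in T (free_points G T act)"
proof (rule comeager_in_countable_Inter)
  show "countable ((\<lambda>g. {x \<in> \<Omega>. act g x \<noteq> x}) ` (carrier G - {\<one>}))"
    using countable_carrier by simp
  show "topspace T \<inter> \<Inter> ((\<lambda>g. {x \<in> \<Omega>. act g x \<noteq> x}) ` (carrier G - {\<one>})) \<subseteq> free_points G T act"
    unfolding free_points_def topspace_inv_lim_top by blast
qed (use openin_moved_points dense_moved_points[OF assms] in auto)

section \<open>Cylinder sets and the uniform measure\<close>

definition cylinders :: "('a set \<Rightarrow> 'a set) set set" where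
  "cylinders = {cylinder F B |F B. F \<in> fin_index G \<and> B \<subseteq> X F}"

lemma cylinder_in_cylinders: "F \<in> fin_index G \<Longrightarrow> B \<subseteq> X F \<Longrightarrow> cylinder F B \<in> cylinders"
  unfolding cylinders_def by blast

lemma cylindersE:
  assumes "C \<in> cylinders"
  obtains F B where "F \<in> fin_index G" "B \<subseteq> X F" "C = cylinder F B"
  using assms unfolding cylinders_def by blast

lemma cylinders_subset_Pow: "cylinders \<subseteq> Pow \<Omega>"
  unfolding cylinders_def cylinder_def by blast

lemma inv_lim_eq_cylinder: "\<Omega> = cylinder {} (X {})"
  unfolding cylinder_def using inv_lim_in_XF by (auto simp: fin_index_def)

lemma cylinder_refine:
  assumes F: "F \<in> fin_index G" "F' \<in> fin_index G" "F \<subseteq> F'"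
  shows "cylinder F B = cylinder F' {q \<in> X F'. coset_proj G (K F) q \<in> B}"
  unfolding cylinder_def using inv_lim_coset_proj[OF _ F] inv_lim_in_XF[OF _ F(2)] by auto

lemma image_cylinder:
  assumes F: "F \<in> fin_index G" and B: "B \<subseteq> X F"
  shows "(\<lambda>x. x F) ` cylinder F B = B"
proof
  show "B \<subseteq> (\<lambda>x. x F) ` cylinder F B"
  proof
    fix q assume q: "q \<in> B"
    then obtain a where a: "a \<in> carrier G" "q = a <# K F" using B by (blast elim: XF_E)
    then have "coset_point a \<in> cylinder F B" "coset_point a F = q"
      using coset_point_in_inv_lim coset_point_apply[OF F] q unfolding cylinder_def by auto
    then show "q \<in> (\<lambda>x. x F) ` cylinder F B" by force
  qed
qed (auto simp: cylinder_def)

lemma cylinder_inject: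
  "F \<in> fin_index G \<Longrightarrow> B \<subseteq> X F \<Longrightarrow> B' \<subseteq> X F \<Longrightarrow> cylinder F B = cylinder F B' \<Longrightarrow> B = B'"
  by (metis image_cylinder)

lemma cylinders_common_index:
  assumes "C \<in> cylinders" "C' \<in> cylinders"
  obtains F B B' where "F \<in> fin_index G" "B \<subseteq> X F" "B' \<subseteq> X F" "C = cylinder F B" "C' = cylinder F B'"
proof -
  obtain F1 B1 where 1: "F1 \<in> fin_index G" "B1 \<subseteq> X F1" "C = cylinder F1 B1"
    using assms(1) by (rule cylindersE)
  obtain F2 B2 where 2: "F2 \<in> fin_index G" "B2 \<subseteq> X F2" "C' = cylinder F2 B2"
    using assms(2) by (rule cylindersE)
  have F: "F1 \<union> F2 \<in> fin_index G" using 1 2 by (simp add: fin_index_iff)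
  show ?thesis
    using that[OF F _ _ 1(3)[unfolded cylinder_refine[OF 1(1) F Un_upper1]]
        2(3)[unfolded cylinder_refine[OF 2(1) F Un_upper2]]]
    by blast
qed

lemma ring_of_sets_cylinders: "ring_of_sets \<Omega> cylinders"
proof (rule ring_of_setsI)
  show "{} \<in> cylinders"
    using cylinder_in_cylinders[of "{}" "{}"] unfolding cylinder_def by (simp add: fin_index_def)
  fix C C' assume "C \<in> cylinders" "C' \<in> cylinders"
  then obtain F B B' where F: "F \<in> fin_index G" "B \<subseteq> X F" "B' \<subseteq> X F"
    and C: "C = cylinder F B" "C' = cylinder F B'"
    by (rule cylinders_common_index)
  have "C \<union> C' = cylinder F (B \<union> B')" "C - C' = cylinder F (B - B')"
    unfolding C cylinder_def by auto
  moreover have "B \<union> B' \<subseteq> X F" "B - B' \<subseteq> X F" using F by auto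
  ultimately show "C \<union> C' \<in> cylinders" "C - C' \<in> cylinders"
    using cylinder_in_cylinders[OF F(1)] by simp_all
qed (rule cylinders_subset_Pow)

lemma Int_stable_cylinders: "Int_stable cylinders"
proof (rule Int_stableI)
  fix C C' assume "C \<in> cylinders" "C' \<in> cylinders"
  then obtain F B B' where F: "F \<in> fin_index G" "B \<subseteq> X F" "B' \<subseteq> X F"
    and C: "C = cylinder F B" "C' = cylinder F B'"
    by (rule cylinders_common_index)
  have "C \<inter> C' = cylinder F (B \<inter> B')"
    unfolding C cylinder_def by auto
  moreover have "B \<inter> B' \<subseteq> X F" using F by auto
  ultimately show "C \<inter> C' \<in> cylinders" using cylinder_in_cylinders[OF F(1)] by simp
qed

lemma countable_cylinders: "countable cylinders"
proof -
  have "cylinders = (\<Union>F\<in>fin_index G. cylinder F ` Pow (X F))"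
    unfolding cylinders_def by blast
  then show ?thesis using countable_fin_index finite_XF by (simp add: countable_finite)
qed

lemma sets_borel_of_inv_lim_top: "sets (borel_of T) = sigma_sets \<Omega> cylinders"
proof -
  have "sets (borel_of T) = sigma_sets \<Omega> {U. openin T U}"
    unfolding borel_of_def topspace_inv_lim_top[symmetric]
    by (rule sets_measure_of) (use openin_subset in blast)
  moreover have "sigma_sets \<Omega> cylinders \<subseteq> sigma_sets \<Omega> {U. openin T U}"
    by (rule sigma_sets_mono') (auto elim!: cylindersE simp: openin_cylinder)
  moreover have "{U. openin T U} \<subseteq> sigma_sets \<Omega> cylinders"
  proof
    fix U assume "U \<in> {U. openin T U}"
    then have U: "openin T U" by simp
    have "U = \<Union>{C \<in> cylinders. C \<subseteq> U}"
    proof (intro equalityI subsetI)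
      fix z assume z: "z \<in> U"
      obtain F where F: "F \<in> fin_index G" "cylinder F {z F} \<subseteq> U"
        using cylinder_basis[OF U z] by blast
      have z\<Omega>: "z \<in> \<Omega>" using z openin_subset[OF U] topspace_inv_lim_top by blast
      have "z \<in> cylinder F {z F}" using z\<Omega> unfolding cylinder_def by simp
      moreover have "cylinder F {z F} \<in> cylinders"
        using cylinder_in_cylinders[OF F(1)] inv_lim_in_XF[OF z\<Omega> F(1)] by simp
      ultimately
      show "z \<in> \<Union>{C \<in> cylinders. C \<subseteq> U}" using F(2) by blast
    qed blast
    moreover have "\<Union>{C \<in> cylinders. C \<subseteq> U} \<in> sigma_sets \<Omega> cylinders"
      using countable_subset[OF _ countable_cylinders] by (intro sigma_sets_UNION) auto
    ultimately show "U \<in> sigma_sets \<Omega> cylinders" by simp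
  qed
  then have "sigma_sets \<Omega> {U. openin T U} \<subseteq> sigma_sets \<Omega> cylinders"
    by (rule sigma_sets_mono)
  ultimately show ?thesis by blast
qed

lemma card_cylinder_refine:
  assumes F: "F \<in> fin_index G" "F' \<in> fin_index G" "F \<subseteq> F'" and B: "B \<subseteq> X F"
  shows "real (card {q \<in> X F'. coset_proj G (K F) q \<in> B}) / real (card (X F')) =
         real (card B) / real (card (X F))"
proof -
  have KF': "subgroup (K F') G" and KF: "subgroup (K F) G" and sub: "K F' \<subseteq> K F"
    using F subgroup_sub_int_fin_index sub_int_antimono by auto
  have fin: "finite (lcosets (K F'))" using finite_XF[OF F(2)] unfolding XF_def .
  define m where "m = card {q \<in> X F'. coset_proj G (K F) q = K F}"
  have "card {q \<in> X F'. coset_proj G (K F) q \<in> B} = card B * m"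
    using card_coset_proj_vimage[OF KF' KF sub fin] B unfolding m_def XF_def by simp
  moreover have "card (X F') = card (X F) * m"
    using card_coset_proj_vimage[OF KF' KF sub fin order_refl] coset_proj_lcosets[OF KF' KF sub]
    unfolding m_def XF_def by (simp add: Collect_conj_eq Int_absorb2 subsetI)
  ultimately show ?thesis
    using card_XF_pos[OF F(1)] card_XF_pos[OF F(2)] by (simp add: field_simps)
qed

lemma cylinder_ratio_eq:
  assumes F: "F \<in> fin_index G" "B \<subseteq> X F" and F': "F' \<in> fin_index G" "B' \<subseteq> X F'"
    and eq: "cylinder F B = cylinder F' B'"
  shows "real (card B) / real (card (X F)) = real (card B') / real (card (X F'))"
proof -
  have U: "F \<union> F' \<in> fin_index G" using F F' by (simp add: fin_index_iff)
  let ?B = "{q \<in> X (F \<union> F'). coset_proj G (K F) q \<in> B}"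
  let ?B' = "{q \<in> X (F \<union> F'). coset_proj G (K F') q \<in> B'}"
  have "cylinder (F \<union> F') ?B = cylinder (F \<union> F') ?B'"
    using eq cylinder_refine[OF F(1) U Un_upper1] cylinder_refine[OF F'(1) U Un_upper2] by simp
  then have "?B = ?B'" by (rule cylinder_inject[OF U, rotated 2]) auto
  then show ?thesis
    using card_cylinder_refine[OF F(1) U Un_upper1 F(2)] card_cylinder_refine[OF F'(1) U Un_upper2 F'(2)]
    by simp
qed

definition cylinder_prob :: "('a set \<Rightarrow> 'a set) set \<Rightarrow> real" where
  "cylinder_prob C = (SOME r. \<exists>F B. F \<in> fin_index G \<and> B \<subseteq> X F \<and> C = cylinder F B \<and>
     r = real (card B) / real (card (X F)))"

lemma cylinder_prob_cylinder:
  assumes F: "F \<in> fin_index G" and B: "B \<subseteq> X F"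
  shows "cylinder_prob (cylinder F B) = real (card B) / real (card (X F))"
proof -
  let ?P = "\<lambda>r. \<exists>F' B'. F' \<in> fin_index G \<and> B' \<subseteq> X F' \<and> cylinder F B = cylinder F' B' \<and>
     r = real (card B') / real (card (X F'))"
  have "?P (cylinder_prob (cylinder F B))"
    unfolding cylinder_prob_def by (rule someI[of ?P]) (use F B in blast)
  then show ?thesis using cylinder_ratio_eq[OF F B] by metis
qed

lemma cylinder_prob_nonneg: "C \<in> cylinders \<Longrightarrow> cylinder_prob C \<ge> 0"
  by (auto elim!: cylindersE simp: cylinder_prob_cylinder)

lemma cylinder_prob_additive:
  assumes "C \<in> cylinders" "C' \<in> cylinders" "C \<inter> C' = {}"
  shows "cylinder_prob (C \<union> C') = cylinder_prob C + cylinder_prob C'"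
proof -
  obtain F B B' where F: "F \<in> fin_index G" "B \<subseteq> X F" "B' \<subseteq> X F"
    and C: "C = cylinder F B" "C' = cylinder F B'"
    using assms(1,2) by (rule cylinders_common_index)
  have "cylinder F (B \<inter> B') = C \<inter> C'" "cylinder F {} = {}"
    unfolding C cylinder_def by blast+
  then have "cylinder F (B \<inter> B') = cylinder F {}" using assms(3) by simp
  then have "B \<inter> B' = {}" by (rule cylinder_inject[OF F(1), rotated 2]) (use F in auto)
  moreover have "finite B" "finite B'" using F finite_XF finite_subset by blast+
  moreover have "C \<union> C' = cylinder F (B \<union> B')" unfolding C cylinder_def by blast
  ultimately show ?thesis
    using F cylinder_prob_cylinder by (simp add: C card_Un_disjoint add_divide_distrib)
qed

text \<open>By the finite intersection property of the compact space \<open>T\<close>, cylinders being closed.\<close>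
lemma cylinders_decseq_eventually_empty:
  assumes C: "range C \<subseteq> cylinders" and dec: "decseq C" and empty: "(\<Inter>i. C i) = {}"
  shows "\<exists>N. C N = {}"
proof (rule ccontr)
  assume nonempty: "\<nexists>N. C N = {}"
  have "\<Inter>\<F> \<noteq> {}" if fin: "finite \<F>" and sub: "\<F> \<subseteq> range C" for \<F>
  proof -
    obtain J where J: "finite J" "\<F> = C ` J" using finite_subset_image[OF fin sub] by blast
    have "C (Max (insert 0 J)) \<subseteq> C j" if "j \<in> J" for j
      using J(1) that dec by (simp add: decseq_def)
    then have "C (Max (insert 0 J)) \<subseteq> \<Inter>\<F>" using J(2) by blast
    then show ?thesis using nonempty by blast
  qed
  moreover have "closedin T (C i)" for i
  proof -
    have "C i \<in> cylinders" using C by blast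
    then obtain F B where "F \<in> fin_index G" "C i = cylinder F B" by (rule cylindersE)
    then show ?thesis by (simp add: closedin_cylinder)
  qed
  ultimately have "\<Inter>(range C) \<noteq> {}"
    by (intro compact_space_fip[THEN iffD1, OF compact_space_inv_lim_top, rule_format]) blast
  then show False using empty by simp
qed

lemma cylinder_prob_extension:
  "\<exists>\<nu>. (\<forall>C\<in>cylinders. \<nu> C = ennreal (cylinder_prob C)) \<and> measure_space \<Omega> (sigma_sets \<Omega> cylinders) \<nu>"
proof (rule ring_of_sets.caratheodory_empty_continuous[OF ring_of_sets_cylinders])
  have "cylinder_prob {} = 0"
    using cylinder_prob_cylinder[of "{}" "{}"] unfolding cylinder_def by (simp add: fin_index_def)
  then show "positive cylinders (\<lambda>C. ennreal (cylinder_prob C))"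
    by (simp add: positive_def)
  show "additive cylinders (\<lambda>C. ennreal (cylinder_prob C))"
    unfolding additive_def
    using cylinder_prob_additive cylinder_prob_nonneg by (simp add: ennreal_plus)
  fix C :: "nat \<Rightarrow> _" assume "range C \<subseteq> cylinders" "decseq C" "(\<Inter>i. C i) = {}"
  then obtain N where N: "C N = {}" using cylinders_decseq_eventually_empty by blast
  have "C n = {}" if "n \<ge> N" for n using \<open>decseq C\<close> N that by (auto simp: decseq_def)
  then show "(\<lambda>i. ennreal (cylinder_prob (C i))) \<longlonglongrightarrow> 0"
    using \<open>cylinder_prob {} = 0\<close>
    by (intro tendsto_eventually) (auto simp: eventually_sequentially intro!: exI[of _ N])
qed simp

lemma exists_uniform_marginals: "\<exists>\<mu>. has_uniform_marginals G H \<mu>"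
proof -
  obtain \<nu> where \<nu>: "\<And>C. C \<in> cylinders \<Longrightarrow> \<nu> C = ennreal (cylinder_prob C)"
    and ms: "measure_space \<Omega> (sigma_sets \<Omega> cylinders) \<nu>"
    using cylinder_prob_extension by blast
  define \<mu> where "\<mu> = measure_of \<Omega> (sigma_sets \<Omega> cylinders) \<nu>"
  have sigma: "sigma_algebra \<Omega> (sigma_sets \<Omega> cylinders)"
    using sigma_algebra_sigma_sets[OF cylinders_subset_Pow] .
  have space: "space \<mu> = \<Omega>" and sets: "sets \<mu> = sigma_sets \<Omega> cylinders"
    unfolding \<mu>_def using sigma_algebra.space_measure_of_eq[OF sigma]
      sigma_algebra.sets_measure_of_eq[OF sigma] by simp_all
  have emeasure_cyl: "emeasure \<mu> (cylinder F B) = ennreal (real (card B) / real (card (X F)))"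
    if "F \<in> fin_index G" "B \<subseteq> X F" for F B
    unfolding \<mu>_def using ms \<nu> cylinder_in_cylinders[OF that] cylinder_prob_cylinder[OF that]
    by (subst emeasure_measure_of_sigma) (auto simp: measure_space_def)
  have proj_vimage: "(\<lambda>x. x F) -` B \<inter> space \<mu> = cylinder F B" for F B
    unfolding space cylinder_def by auto
  have "has_uniform_marginals G H \<mu>"
    unfolding has_uniform_marginals_def
  proof (intro conjI ballI)
    show "prob_space \<mu>"
      using emeasure_cyl[of "{}" "X {}"] card_XF_pos[of "{}"] inv_lim_eq_cylinder
      by (intro prob_spaceI) (simp add: space fin_index_def)
    show "space \<mu> = inv_lim G H" by (rule space)
    show "sets \<mu> = sets (borel_of T)" using sets sets_borel_of_inv_lim_top by simp
    fix F assume F: "F \<in> fin_index G"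
    show meas: "(\<lambda>x. x F) \<in> \<mu> \<rightarrow>\<^sub>M count_space (X F)"
      unfolding measurable_count_space_eq2[OF finite_XF[OF F]] proj_vimage
      using inv_lim_in_XF[OF _ F] cylinder_in_cylinders[OF F] by (auto simp: space sets)
    show "distr \<mu> (count_space (X F)) (\<lambda>x. x F) = uniform_count_measure (X F)"
      using emeasure_distr[OF meas] emeasure_cyl[OF F] finite_XF[OF F]
      by (intro measure_eqI) (auto simp: sets_uniform_count_measure proj_vimage
          emeasure_uniform_count_measure)
  qed
  then show ?thesis by blast
qed

lemma inv_lim_act_vimage_cylinder:
  assumes "g \<in> carrier G" "F \<in> fin_index G"
  shows "act g -` cylinder F B \<inter> \<Omega> = cylinder F {q \<in> X F. g <# q \<in> B}"
  unfolding cylinder_def using inv_lim_act_closed[OF assms(1)] inv_lim_act_apply[OF assms(2)]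
    inv_lim_in_XF[OF _ assms(2)]
  by auto

lemma card_translate_vimage:
  assumes g: "g \<in> carrier G" and F: "F \<in> fin_index G" and B: "B \<subseteq> X F"
  shows "card {q \<in> X F. g <# q \<in> B} = card B"
proof -
  have bij: "bij_betw (\<lambda>q. g <# q) (X F) (X F)"
    unfolding XF_def using bij_betw_l_coset_lcosets[OF subgroup_sub_int_fin_index[OF F] g] .
  have "B \<subseteq> (\<lambda>q. g <# q) ` X F"
    using bij_betw_imp_surj_on[OF bij] B by simp
  then have image: "(\<lambda>q. g <# q) ` {q \<in> X F. g <# q \<in> B} = B" by blast
  have "bij_betw (\<lambda>q. g <# q) {q \<in> X F. g <# q \<in> B} B"
    by (intro bij_betw_subset[OF bij _ image]) blast
  then show ?thesis by (rule bij_betw_same_card)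
qed

section \<open>Points fixed by \<open>S\<close>\<close>

lemma fixed_lcosets_coordinate_mono:
  assumes S: "S \<subseteq> carrier G" and x: "x \<in> \<Omega>"
    and F: "F \<in> fin_index G" "F' \<in> fin_index G" "F \<subseteq> F'"
    and fixed: "x F' \<in> fixed_lcosets G S (K F')"
  shows "x F \<in> fixed_lcosets G S (K F)"
proof -
  obtain a where a: "a \<in> carrier G" "x F' = a <# K F'"
    using inv_lim_in_XF[OF x F(2)] by (rule XF_E)
  have "\<forall>s\<in>S. inv a \<otimes> s \<otimes> a \<in> K F'"
    using fixed a l_coset_in_fixed_lcosets_iff[OF subgroup_sub_int_fin_index[OF F(2)] S] by simp
  then have "a <# K F \<in> fixed_lcosets G S (K F)"
    using sub_int_antimono[OF F(3)] l_coset_in_fixed_lcosets_iff[OF subgroup_sub_int_fin_index[OF F(1)] S a(1)]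
    by blast
  then show ?thesis using inv_lim_compat[OF x F a] by simp
qed

lemma inv_lim_fixed_iff:
  assumes x: "x \<in> \<Omega>"
  shows "(\<forall>s\<in>S. act s x = x) \<longleftrightarrow> (\<forall>F\<in>fin_index G. x F \<in> fixed_lcosets G S (K F))"
proof -
  have "act s x = x \<longleftrightarrow> (\<forall>F\<in>fin_index G. s <# x F = x F)" for s
    using inv_lim_undefined[OF x] by (auto simp: fun_eq_iff inv_lim_act_def)
  then show ?thesis
    using inv_lim_in_XF[OF x] unfolding fixed_lcosets_def XF_def by blast
qed

lemma fixed_lcosets_subset_XF: "fixed_lcosets G S (K F) \<subseteq> X F"
  unfolding fixed_lcosets_def XF_def by blast

lemma fixed_points_decseq_cylinders:
  assumes S: "S \<subseteq> carrier G"
  obtains Fs :: "nat \<Rightarrow> 'a set" where "\<And>k. Fs k \<in> fin_index G"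
    "decseq (\<lambda>k. cylinder (Fs k) (fixed_lcosets G S (K (Fs k))))"
    "{x \<in> \<Omega>. \<forall>s\<in>S. act s x = x} = (\<Inter>k. cylinder (Fs k) (fixed_lcosets G S (K (Fs k))))"
proof -
  have countable: "countable (carrier G - {\<one>})" using countable_carrier by simp
  obtain Fs :: "nat \<Rightarrow> 'a set" where Fs: "incseq Fs" "\<And>k. finite (Fs k)"
    "\<And>k. Fs k \<subseteq> carrier G - {\<one>}" "\<And>F. finite F \<Longrightarrow> F \<subseteq> carrier G - {\<one>} \<Longrightarrow> \<exists>k. F \<subseteq> Fs k"
    by (rule countable_finite_exhaustion[OF countable], rule that)
  have Fs_index: "Fs k \<in> fin_index G" for k using Fs by (simp add: fin_index_iff)
  let ?D = "\<lambda>k. cylinder (Fs k) (fixed_lcosets G S (K (Fs k)))"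
  have "decseq ?D"
  proof (rule decseq_SucI)
    fix k show "?D (Suc k) \<subseteq> ?D k"
      using fixed_lcosets_coordinate_mono[OF S _ Fs_index Fs_index incseq_SucD[OF Fs(1)]]
      unfolding cylinder_def by blast
  qed
  moreover have "{x \<in> \<Omega>. \<forall>s\<in>S. act s x = x} = (\<Inter>k. ?D k)"
  proof (intro equalityI subsetI)
    fix x assume "x \<in> (\<Inter>k. ?D k)"
    then have x: "x \<in> \<Omega>" "\<And>k. x (Fs k) \<in> fixed_lcosets G S (K (Fs k))"
      unfolding cylinder_def by auto
    have "x F \<in> fixed_lcosets G S (K F)" if F: "F \<in> fin_index G" for F
    proof -
      obtain k where "F \<subseteq> Fs k" using Fs(4)[of F] F by (auto simp: fin_index_iff)
      then show ?thesis using fixed_lcosets_coordinate_mono[OF S x(1) F Fs_index] x(2) by blast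
    qed
    then show "x \<in> {x \<in> \<Omega>. \<forall>s\<in>S. act s x = x}" using inv_lim_fixed_iff[OF x(1)] x(1) by blast
  next
    fix x assume x: "x \<in> {x \<in> \<Omega>. \<forall>s\<in>S. act s x = x}"
    then have "x \<in> ?D k" for k
      using inv_lim_fixed_iff[of x] Fs_index[of k] unfolding cylinder_def by blast
    then show "x \<in> (\<Inter>k. ?D k)" by blast
  qed
  ultimately show ?thesis by (rule that[OF Fs_index])
qed

context
  assumes coprime_index: "\<And>\<gamma> \<delta>. \<gamma> \<in> carrier G - {\<one>} \<Longrightarrow> \<delta> \<in> carrier G - {\<one>} \<Longrightarrow> \<gamma> \<noteq> \<delta> \<Longrightarrow>
    coprime (card (lcosets (H \<gamma>))) (card (lcosets (H \<delta>)))"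
begin

lemma card_lcosets_sub_int:
  "finite F \<Longrightarrow> F \<subseteq> carrier G - {\<one>} \<Longrightarrow> card (lcosets (K F)) = (\<Prod>\<gamma>\<in>F. card (lcosets (H \<gamma>)))"
proof (induction F rule: finite_induct)
  case empty
  then show ?case by (simp add: sub_int_empty lcosets_carrier_eq)
next
  case (insert \<gamma> F)
  then have \<gamma>: "\<gamma> \<in> carrier G - {\<one>}" and F: "F \<subseteq> carrier G - {\<one>}" by auto
  have "coprime (card (lcosets (K F))) (card (lcosets (H \<gamma>)))"
    using insert coprime_index \<gamma> by (auto intro!: prod_coprime_left)
  then show ?case
    using card_lcosets_Int_coprime[OF subgroup_sub_int[OF F] subgroup_H[OF \<gamma>]
        finite_lcosets_sub_int[OF insert(1) F] finite_lcosets_H[OF \<gamma>]] insert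
    by (simp add: sub_int_insert mult.commute)
qed

lemma card_fixed_lcosets_sub_int:
  assumes S: "S \<subseteq> carrier G"
  shows "finite F \<Longrightarrow> F \<subseteq> carrier G - {\<one>} \<Longrightarrow>
    card (fixed_lcosets G S (K F)) = (\<Prod>\<gamma>\<in>F. card (fixed_lcosets G S (H \<gamma>)))"
proof (induction F rule: finite_induct)
  case empty
  then show ?case by (simp add: sub_int_empty fixed_lcosets_carrier_eq[OF S])
next
  case (insert \<gamma> F)
  then have \<gamma>: "\<gamma> \<in> carrier G - {\<one>}" and F: "F \<subseteq> carrier G - {\<one>}" by auto
  have "coprime (card (lcosets (K F))) (card (lcosets (H \<gamma>)))"
    using insert coprime_index \<gamma> card_lcosets_sub_int[OF insert(1) F] by (auto intro!: prod_coprime_left)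
  then show ?case
    using card_fixed_lcosets_Int_coprime[OF subgroup_sub_int[OF F] subgroup_H[OF \<gamma>]
        finite_lcosets_sub_int[OF insert(1) F] finite_lcosets_H[OF \<gamma>] _ S] insert
    by (simp add: sub_int_insert mult.commute)
qed

lemma fixed_ratio_sub_int:
  assumes S: "S \<subseteq> carrier G" and F: "F \<in> fin_index G"
  shows "real (card (fixed_lcosets G S (K F))) / real (card (X F)) =
    (\<Prod>\<gamma>\<in>F. real (card (fixed_lcosets G S (H \<gamma>))) / real (card (lcosets (H \<gamma>))))"
  using F card_lcosets_sub_int card_fixed_lcosets_sub_int[OF S]
  by (simp add: fin_index_iff XF_def prod_dividef)

lemma INF_prod_le_fixed_ratio:
  assumes S: "S \<subseteq> carrier G"
    and \<epsilon>: "\<And>\<gamma>. \<gamma> \<in> carrier G - {\<one>} \<Longrightarrow> \<epsilon> \<gamma> \<le> 1"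
    and fixed: "\<And>\<gamma>. \<gamma> \<in> carrier G - {\<one>} \<Longrightarrow>
      (1 - \<epsilon> \<gamma>) * real (card (lcosets (H \<gamma>))) \<le> real (card (fixed_lcosets G S (H \<gamma>)))"
    and F: "F \<in> fin_index G"
  shows "(INF F'\<in>fin_index G. \<Prod>\<gamma>\<in>F'. 1 - \<epsilon> \<gamma>) \<le>
    real (card (fixed_lcosets G S (K F))) / real (card (X F))"
proof -
  have nonneg: "0 \<le> (\<Prod>\<gamma>\<in>F'. 1 - \<epsilon> \<gamma>)" if F': "F' \<in> fin_index G" for F'
  proof (rule prod_nonneg)
    fix \<gamma> assume "\<gamma> \<in> F'"
    then have "\<gamma> \<in> carrier G - {\<one>}" using F' by (auto simp: fin_index_iff)
    then show "0 \<le> 1 - \<epsilon> \<gamma>" using \<epsilon> by simp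
  qed
  have "bdd_below ((\<lambda>F'. \<Prod>\<gamma>\<in>F'. 1 - \<epsilon> \<gamma>) ` fin_index G)"
    by (rule bdd_belowI2[where m = 0]) (rule nonneg)
  then have "(INF F'\<in>fin_index G. \<Prod>\<gamma>\<in>F'. 1 - \<epsilon> \<gamma>) \<le> (\<Prod>\<gamma>\<in>F. 1 - \<epsilon> \<gamma>)"
    by (rule cINF_lower[OF _ F])
  also have "\<dots> \<le> (\<Prod>\<gamma>\<in>F. real (card (fixed_lcosets G S (H \<gamma>))) / real (card (lcosets (H \<gamma>))))"
  proof (rule prod_mono)
    fix \<gamma> assume "\<gamma> \<in> F"
    then have \<gamma>: "\<gamma> \<in> carrier G - {\<one>}" using F by (auto simp: fin_index_iff)
    have "card (lcosets (H \<gamma>)) > 0"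
      using finite_lcosets_H[OF \<gamma>] lcosets_l_coset[OF one_closed] card_gt_0_iff by blast
    then show "0 \<le> 1 - \<epsilon> \<gamma> \<and> 1 - \<epsilon> \<gamma> \<le> real (card (fixed_lcosets G S (H \<gamma>))) / real (card (lcosets (H \<gamma>)))"
      using \<epsilon>[OF \<gamma>] fixed[OF \<gamma>] by (simp add: field_simps)
  qed
  also have "\<dots> = real (card (fixed_lcosets G S (K F))) / real (card (X F))"
    using fixed_ratio_sub_int[OF S F] by simp
  finally show ?thesis .
qed

end

end

section \<open>Invariance, ergodicity and non-freeness of the uniform measure\<close>

locale uniform_inv_lim_measure = coset_inverse_system G H for G :: "('a, 'c) monoid_scheme" (structure) and H +
  fixes \<mu> :: "('a set \<Rightarrow> 'a set) measure"
  assumes uniform_marginals: "has_uniform_marginals G H \<mu>"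
begin

sublocale prob_space \<mu>
  using uniform_marginals by (simp add: has_uniform_marginals_def)

lemma space_eq: "space \<mu> = \<Omega>"
  using uniform_marginals by (simp add: has_uniform_marginals_def)

lemma sets_eq: "sets \<mu> = sigma_sets \<Omega> cylinders"
  using uniform_marginals sets_borel_of_inv_lim_top by (simp add: has_uniform_marginals_def)

lemma cylinders_subset_sets: "cylinders \<subseteq> sets \<mu>"
  using sets_eq by auto

lemma measure_cylinder:
  assumes F: "F \<in> fin_index G" and B: "B \<subseteq> X F"
  shows "measure \<mu> (cylinder F B) = real (card B) / real (card (X F))"
proof -
  have meas: "(\<lambda>x. x F) \<in> \<mu> \<rightarrow>\<^sub>M count_space (X F)"
    and distr: "distr \<mu> (count_space (X F)) (\<lambda>x. x F) = uniform_count_measure (X F)"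
    using uniform_marginals F by (auto simp: has_uniform_marginals_def)
  have "(\<lambda>x. x F) -` B \<inter> space \<mu> = cylinder F B"
    unfolding space_eq cylinder_def by auto
  then have "emeasure \<mu> (cylinder F B) = emeasure (uniform_count_measure (X F)) B"
    using emeasure_distr[OF meas, of B] B distr by simp
  also have "\<dots> = ennreal (real (card B) / real (card (X F)))"
    using emeasure_uniform_count_measure[OF finite_XF[OF F] B] by simp
  finally show ?thesis by (simp add: emeasure_eq_measure)
qed

lemma measurable_inv_lim_act:
  assumes g: "g \<in> carrier G"
  shows "act g \<in> \<mu> \<rightarrow>\<^sub>M \<mu>"
proof (rule measurable_sigma_sets[OF sets_eq cylinders_subset_Pow])
  show "act g \<in> space \<mu> \<rightarrow> \<Omega>" using inv_lim_act_closed[OF g] space_eq by auto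
  fix C assume "C \<in> cylinders"
  then obtain F B where F: "F \<in> fin_index G" and C: "C = cylinder F B" by (rule cylindersE)
  then show "act g -` C \<inter> space \<mu> \<in> sets \<mu>"
    using inv_lim_act_vimage_cylinder[OF g F] cylinders_subset_sets cylinder_in_cylinders[OF F]
    by (auto simp: space_eq)
qed

lemma distr_inv_lim_act:
  assumes g: "g \<in> carrier G"
  shows "distr \<mu> \<mu> (act g) = \<mu>"
proof (rule measure_eqI_generator_eq_countable[OF Int_stable_cylinders cylinders_subset_Pow,
      where A = "{\<Omega>}"])
  fix C assume "C \<in> cylinders"
  then obtain F B where F: "F \<in> fin_index G" "B \<subseteq> X F" and C: "C = cylinder F B"
    by (rule cylindersE)
  have "emeasure (distr \<mu> \<mu> (act g)) C = emeasure \<mu> (cylinder F {q \<in> X F. g <# q \<in> B})"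
    using emeasure_distr[OF measurable_inv_lim_act[OF g]] inv_lim_act_vimage_cylinder[OF g F(1)]
      cylinders_subset_sets \<open>C \<in> cylinders\<close>
    by (auto simp: C space_eq)
  also have "\<dots> = emeasure \<mu> C"
    using measure_cylinder[OF F(1)] card_translate_vimage[OF g F] F(2)
    by (simp add: C emeasure_eq_measure)
  finally show "emeasure (distr \<mu> \<mu> (act g)) C = emeasure \<mu> C" .
qed (use sets_eq inv_lim_eq_cylinder cylinder_in_cylinders[of "{}" "X {}"]
      prob_space_distr[OF measurable_inv_lim_act[OF g]] in
      \<open>auto simp: fin_index_def prob_space_def finite_measure.emeasure_finite\<close>)

context
  fixes A assumes A: "A \<in> sets \<mu>" and invariant: "\<forall>g\<in>carrier G. act g ` A = A"
begin

private lemma A_subset: "A \<subseteq> \<Omega>"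
  using sets.sets_into_space[OF A] space_eq by simp

private lemma vimage_invariant:
  assumes g: "g \<in> carrier G"
  shows "act g -` A \<inter> \<Omega> = A"
proof
  have A_eq: "act g ` A = A" using invariant g by blast
  show "act g -` A \<inter> \<Omega> \<subseteq> A"
  proof
    fix x assume x: "x \<in> act g -` A \<inter> \<Omega>"
    then obtain y where y: "y \<in> A" "act g x = act g y" using A_eq by (metis IntD1 imageE vimageE)
    have "x \<in> \<Omega>" "y \<in> \<Omega>" using x y A_subset by auto
    then have "x = y" using y(2) inv_lim_act_inv[OF g] by metis
    then show "x \<in> A" using y by simp
  qed
  show "A \<subseteq> act g -` A \<inter> \<Omega>" using A_eq A_subset by blast
qed

text \<open>By transitivity of the action on \<open>X F\<close> and invariance of \<open>A\<close> and \<open>\<mu>\<close>.\<close>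
lemma measure_Int_cylinder_singleton:
  assumes F: "F \<in> fin_index G" and q: "q \<in> X F"
  shows "measure \<mu> (A \<inter> cylinder F {q}) = measure \<mu> (A \<inter> cylinder F {K F})"
proof -
  obtain a where a: "a \<in> carrier G" "q = a <# K F" using q by (rule XF_E)
  have "{p \<in> X F. inv a <# p \<in> {K F}} = {q}"
  proof -
    have "inv a <# p = K F \<longleftrightarrow> p = q" if "p \<in> X F" for p
      using that a XF_subset_carrier[OF F] l_coset_inv_cancel
        l_coset_inv_cancel[of "K F" "a"] subgroup.subset[OF subgroup_sub_int_fin_index[OF F]]
      by (metis inv_closed inv_inv)
    then show ?thesis using q by auto
  qed
  then have "act (inv a) -` (A \<inter> cylinder F {K F}) \<inter> space \<mu> = A \<inter> cylinder F {q}"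
    using vimage_invariant[of "inv a"] inv_lim_act_vimage_cylinder[OF _ F, of "inv a" "{K F}"] a(1)
    unfolding space_eq by auto
  moreover have "A \<inter> cylinder F {K F} \<in> sets \<mu>"
    using A cylinders_subset_sets cylinder_in_cylinders[OF F] XF_l_coset[OF one_closed]
      lcos_mult_one subgroup.subset[OF subgroup_sub_int_fin_index[OF F]]
    by (metis Int_lower2 empty_subsetI insert_subset sets.Int subsetD)
  ultimately show ?thesis
    using measure_distr[OF measurable_inv_lim_act[of "inv a"]] distr_inv_lim_act[of "inv a"] a(1)
    by simp
qed

lemma measure_Int_cylinder:
  assumes C: "C \<in> cylinders"
  shows "measure \<mu> (A \<inter> C) = measure \<mu> A * measure \<mu> C"
proof -
  have sum: "measure \<mu> (A \<inter> cylinder F B) = real (card B) * measure \<mu> (A \<inter> cylinder F {K F})"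
    if F: "F \<in> fin_index G" and B: "B \<subseteq> X F" for F B
  proof -
    have "finite B" using B finite_XF[OF F] finite_subset by blast
    have "A \<inter> cylinder F B = (\<Union>q\<in>B. A \<inter> cylinder F {q})"
      unfolding cylinder_def by blast
    moreover have "measure \<mu> (\<Union>q\<in>B. A \<inter> cylinder F {q}) = (\<Sum>q\<in>B. measure \<mu> (A \<inter> cylinder F {q}))"
    proof (rule measure_finite_Union[OF \<open>finite B\<close>])
      show "(\<lambda>q. A \<inter> cylinder F {q}) ` B \<subseteq> sets \<mu>"
      proof (rule image_subsetI)
        fix q assume "q \<in> B"
        then have "cylinder F {q} \<in> sets \<mu>"
          using B cylinders_subset_sets cylinder_in_cylinders[OF F, of "{q}"] by blast
        then show "A \<inter> cylinder F {q} \<in> sets \<mu>" using A by blast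
      qed
      show "disjoint_family_on (\<lambda>q. A \<inter> cylinder F {q}) B"
        unfolding disjoint_family_on_def cylinder_def by blast
    qed simp
    ultimately have "measure \<mu> (A \<inter> cylinder F B) = (\<Sum>q\<in>B. measure \<mu> (A \<inter> cylinder F {q}))"
      by simp
    also have "\<dots> = (\<Sum>q\<in>B. measure \<mu> (A \<inter> cylinder F {K F}))"
      using measure_Int_cylinder_singleton[OF F] B by (intro sum.cong) auto
    finally show ?thesis by simp
  qed
  obtain F B where F: "F \<in> fin_index G" "B \<subseteq> X F" and C_eq: "C = cylinder F B"
    using C by (rule cylindersE)
  have "A \<inter> cylinder F (X F) = A"
    using A_subset inv_lim_in_XF[OF _ F(1)] unfolding cylinder_def by blast
  then have "measure \<mu> A = real (card (X F)) * measure \<mu> (A \<inter> cylinder F {K F})"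
    using sum[OF F(1) order_refl] by simp
  then show ?thesis
    using sum[OF F] measure_cylinder[OF F] card_XF_pos[OF F(1)] by (simp add: C_eq field_simps)
qed

lemma measure_invariant_0_or_1: "measure \<mu> A = 0 \<or> measure \<mu> A = 1"
  using Int_stable_cylinders cylinders_subset_Pow sets_eq A measure_Int_cylinder
    inv_lim_eq_cylinder cylinder_in_cylinders[of "{}" "X {}"]
  by (intro measure_0_or_1_if_indep_generator) (auto simp: space_eq fin_index_def)

end

lemma ergodic_invariant_measure_inv_lim: "ergodic_invariant_measure G T act \<mu>"
  unfolding ergodic_invariant_measure_def
  using prob_space_axioms space_eq topspace_inv_lim_top uniform_marginals
    measurable_inv_lim_act distr_inv_lim_act measure_invariant_0_or_1
  by (auto simp: has_uniform_marginals_def)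

lemma measure_fixed_points_ge:
  assumes S: "S \<subseteq> carrier G"
    and ratio: "\<And>F. F \<in> fin_index G \<Longrightarrow> c \<le> real (card (fixed_lcosets G S (K F))) / real (card (X F))"
  shows "{x \<in> \<Omega>. \<forall>s\<in>S. act s x = x} \<in> sets \<mu>" "c \<le> measure \<mu> {x \<in> \<Omega>. \<forall>s\<in>S. act s x = x}"
proof -
  obtain Fs where Fs: "\<And>k. Fs k \<in> fin_index G"
    and dec: "decseq (\<lambda>k. cylinder (Fs k) (fixed_lcosets G S (K (Fs k))))"
    and eq: "{x \<in> \<Omega>. \<forall>s\<in>S. act s x = x} = (\<Inter>k. cylinder (Fs k) (fixed_lcosets G S (K (Fs k))))"
    by (rule fixed_points_decseq_cylinders[OF S], rule that)
  have sets: "cylinder (Fs k) (fixed_lcosets G S (K (Fs k))) \<in> sets \<mu>" for k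
    using cylinder_in_cylinders[OF Fs fixed_lcosets_subset_XF] cylinders_subset_sets by blast
  then show "{x \<in> \<Omega>. \<forall>s\<in>S. act s x = x} \<in> sets \<mu>" unfolding eq by auto
  have "(\<lambda>k. measure \<mu> (cylinder (Fs k) (fixed_lcosets G S (K (Fs k))))) \<longlonglongrightarrow>
      measure \<mu> {x \<in> \<Omega>. \<forall>s\<in>S. act s x = x}"
    unfolding eq using sets by (intro finite_Lim_measure_decseq[OF _ dec]) auto
  moreover have "c \<le> measure \<mu> (cylinder (Fs k) (fixed_lcosets G S (K (Fs k))))" for k
    using measure_cylinder[OF Fs fixed_lcosets_subset_XF] ratio[OF Fs] by simp
  ultimately show "c \<le> measure \<mu> {x \<in> \<Omega>. \<forall>s\<in>S. act s x = x}"
    by (intro LIMSEQ_le_const) auto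
qed

lemma not_AE_free_points:
  assumes S: "subgroup S G" "S \<noteq> {\<one>}" and c: "c > 0"
    and ratio: "\<And>F. F \<in> fin_index G \<Longrightarrow> c \<le> real (card (fixed_lcosets G S (K F))) / real (card (X F))"
  shows "\<not> (AE x in \<mu>. x \<in> free_points G T act)"
proof
  let ?Fix = "{x \<in> \<Omega>. \<forall>s\<in>S. act s x = x}"
  have S_carrier: "S \<subseteq> carrier G" using subgroup.subset[OF S(1)] .
  obtain s where s: "s \<in> S" "s \<noteq> \<one>" using S subgroup.one_closed by blast
  assume free: "AE x in \<mu>. x \<in> free_points G T act"
  have not_fixed: "x \<notin> ?Fix" if "x \<in> free_points G T act" for x
    using that s S_carrier unfolding free_points_def by blast
  have "AE x in \<mu>. x \<notin> ?Fix" by (rule eventually_mono[OF free not_fixed])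
  then have "emeasure \<mu> ?Fix = 0"
    using measure_fixed_points_ge(1)[OF S_carrier ratio] by (simp add: AE_iff_measurable[OF _ refl] space_eq)
  then show False
    using measure_fixed_points_ge(2)[OF S_carrier ratio] c by (simp add: emeasure_eq_measure)
qed

end

theorem theorem3p2:
  fixes G :: "('a, 'c) monoid_scheme" (structure)
    and S :: "'a set"
    and \<epsilon> :: "'a \<Rightarrow> real"
    and n :: "'a \<Rightarrow> int"
    and H :: "'a \<Rightarrow> 'a set"
  assumes grp: "group G"
    and cntbl: "countable (carrier G)"
    and S_sub: "subgroup S G"
    and S_nontriv: "S \<noteq> {\<one>}"
    and eps_range: "\<forall>\<gamma>\<in>carrier G - {\<one>}. 0 < \<epsilon> \<gamma> \<and> \<epsilon> \<gamma> < 1"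
    and eps_prod: "(INF F\<in>fin_index G. (\<Prod>\<gamma>\<in>F. 1 - \<epsilon> \<gamma>)) > 0"
    and n_coprime: "\<forall>\<gamma>\<in>carrier G - {\<one>}. \<forall>\<delta>\<in>carrier G - {\<one>}.
                      \<gamma> \<noteq> \<delta> \<longrightarrow> coprime (n \<gamma>) (n \<delta>)"
    and H_sub: "\<forall>\<gamma>\<in>carrier G - {\<one>}. subgroup (H \<gamma>) G"
    and H_fin: "\<forall>\<gamma>\<in>carrier G - {\<one>}. finite (lcosets (H \<gamma>))"
    and H_pow: "\<forall>\<gamma>\<in>carrier G - {\<one>}. \<exists>k::nat. int (card (lcosets (H \<gamma>))) = n \<gamma> ^ k"
    and H_notin: "\<forall>\<gamma>\<in>carrier G - {\<one>}. \<gamma> \<notin> H \<gamma>"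
    and H_fix: "\<forall>\<gamma>\<in>carrier G - {\<one>}.
                  real (card {q \<in> lcosets (H \<gamma>). \<forall>s\<in>S. s <# q = q})
                    \<ge> (1 - \<epsilon> \<gamma>) * real (card (lcosets (H \<gamma>)))"
  shows "(\<exists>\<mu>. has_uniform_marginals G H \<mu>) \<and>
         (\<forall>\<mu>. has_uniform_marginals G H \<mu> \<longrightarrow>
            allosteric G (inv_lim_top G H) (inv_lim_act G) \<mu>)"
proof -
  interpret coset_inverse_system G H
    using grp cntbl H_sub H_fin by (simp add: coset_inverse_system_def coset_inverse_system_axioms_def)
  have coprime_index: "coprime (card (lcosets (H \<gamma>))) (card (lcosets (H \<delta>)))"
    if "\<gamma> \<in> carrier G - {\<one>}" "\<delta> \<in> carrier G - {\<one>}" "\<gamma> \<noteq> \<delta>" for \<gamma> \<delta>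
    using H_pow n_coprime that coprime_of_int_powers by metis
  have ratio: "(INF F\<in>fin_index G. \<Prod>\<gamma>\<in>F. 1 - \<epsilon> \<gamma>) \<le>
      real (card (fixed_lcosets G S (K F))) / real (card (X F))" if "F \<in> fin_index G" for F
    using coprime_index subgroup.subset[OF S_sub] eps_range H_fix that
    by (intro INF_prod_le_fixed_ratio) (auto simp: fixed_lcosets_def less_imp_le)
  show ?thesis
  proof (intro conjI allI impI)
    show "\<exists>\<mu>. has_uniform_marginals G H \<mu>" by (rule exists_uniform_marginals)
    fix \<mu> assume "has_uniform_marginals G H \<mu>"
    then interpret uniform_inv_lim_measure G H \<mu> by unfold_locales
    show "allosteric G (inv_lim_top G H) (inv_lim_act G) \<mu>"
      unfolding allosteric_def
      using compact_space_inv_lim_top metrizable_space_inv_lim_top top_action_inv_lim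
        minimal_action_inv_lim ergodic_invariant_measure_inv_lim comeager_free_points H_notin
        not_AE_free_points[OF S_sub S_nontriv eps_prod ratio]
      by blast
  qed
qed

end
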